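(* On the multiple-access channel, there is a symmetric stable protocol for each injection rate $\lambda<1/\mathrm{e}$.
   Context: Multiple-access channel: a set of stations share a single channel; in a time slot, a transmission is successful iff exactly one station transmits. Packets arrive over time at stations, either stochastically (finitely many independent generators, each injecting at most one packet per slot, with time-invariant distributions) or by a $(w,\lambda)$-bounded adversary; the injection rate is the expected number of packets injected per slot (stochastic case), respectively the adversary may inject at most $\lambda w$ packets in any $w$ consecutive slots. Symmetric: all stations run the same protocol and have no individual ids. Stable: expected queue lengths are bounded at all times and expected latency is bounded. *)

theory Defs
  imports "HOL-Probability.Probability"
begin

(* Multiple-access channel with stations 0..<n, stochastic injection by finitely many
   independent generators, symmetric protocols (every station runs the same protocol
   from the same initial state; no identifiers are visible to the protocol).

   A packet is identified by (injection slot, generator index); this is unique since a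
   generator injects at most one packet per slot. Queues are FIFO lists of packets. *)

type_synonym pkt = "nat \<times> nat"
type_synonym lstate = "nat \<times> pkt list"     (* local protocol state, packet queue *)
type_synonym gstate = "nat \<Rightarrow> lstate"

(* A symmetric protocol (countable local state space, encoded in nat).
   mp_act s q : random action given local state s and queue length q:
                None = stay silent, Some m = transmit (with control bits m).
   mp_upd s a fb k : new local state after the slot, given own action a,
                channel feedback fb (Some m = a successful transmission carrying
                control bits m was heard; None = silence or collision, which are
                indistinguishable), and number k of packets newly injected at the station. *)
record mac_protocol =
  mp_init :: nat
  mp_act :: "nat \<Rightarrow> nat \<Rightarrow> nat option pmf"
  mp_upd :: "nat \<Rightarrow> nat option \<Rightarrow> nat option \<Rightarrow> nat \<Rightarrow> nat"

(* Generators: a list gs of per-slot distributions; gs!g yields None (no injection) or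
   Some i (inject one packet at station i). Independent across generators and slots,
   and time invariant. *)
definition valid_gens :: "nat \<Rightarrow> nat option pmf list \<Rightarrow> bool" where
  "valid_gens n gs \<longleftrightarrow> (\<forall>g < length gs. \<forall>i. Some i \<in> set_pmf (gs ! g) \<longrightarrow> i < n)"

definition inj_rate :: "nat option pmf list \<Rightarrow> real" where
  "inj_rate gs = (\<Sum>g<length gs. measure_pmf.prob (gs ! g) {x. x \<noteq> None})"

(* Packets injected during
   slot t join the queues at the end of the slot. *)
definition mac_step :: "mac_protocol \<Rightarrow> nat \<Rightarrow> nat option pmf list \<Rightarrow> nat \<Rightarrow> gstate \<Rightarrow> gstate pmf" where
  "mac_step P n gs t \<sigma> =
     Pi_pmf {..<n} None (\<lambda>i. mp_act P (fst (\<sigma> i)) (length (snd (\<sigma> i)))) \<bind> (\<lambda>a.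
     Pi_pmf {..<length gs} None (\<lambda>g. gs ! g) \<bind> (\<lambda>r.
     (let T = {i. i < n \<and> a i \<noteq> None};
          fb = (if card T = 1 then a (the_elem T) else None)
      in return_pmf (\<lambda>i. if i < n then
            (mp_upd P (fst (\<sigma> i)) (a i) fb (card {g. g < length gs \<and> r g = Some i}),
             (if T = {i} then tl (snd (\<sigma> i)) else snd (\<sigma> i))
               @ map (\<lambda>g. (t, g)) (filter (\<lambda>g. r g = Some i) [0..<length gs]))
          else \<sigma> i))))"

fun mac_run :: "mac_protocol \<Rightarrow> nat \<Rightarrow> nat option pmf list \<Rightarrow> nat \<Rightarrow> gstate pmf" where
  "mac_run P n gs 0 = return_pmf (\<lambda>i. (mp_init P, []))"
| "mac_run P n gs (Suc t) = mac_run P n gs t \<bind> mac_step P n gs t"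

(* Stability: expected queue lengths bounded at all times, and the expected latency
   of every packet (conditional on its injection) is bounded by a common constant L.
   The packet (s,g) is injected in slot s and is present in the system at times
   s+1, ..., s+latency, so E[latency ; injected] = sum_k P(present at time s+1+k). *)
definition mac_stable :: "mac_protocol \<Rightarrow> nat \<Rightarrow> nat option pmf list \<Rightarrow> bool" where
  "mac_stable P n gs \<longleftrightarrow>
     (\<exists>B::real. \<forall>t. \<forall>i<n.
        (\<integral>\<^sup>+ \<sigma>. ennreal (real (length (snd (\<sigma> i)))) \<partial>measure_pmf (mac_run P n gs t)) \<le> ennreal B)
   \<and> (\<exists>L::real. \<forall>s. \<forall>g<length gs. \<forall>K.
        (\<Sum>k<K. measure_pmf.prob (mac_run P n gs (Suc s + k))
                   {\<sigma>. \<exists>i<n. (s, g) \<in> set (snd (\<sigma> i))})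
        \<le> L * measure_pmf.prob (gs ! g) {x. x \<noteq> None})"

end

theory Submission
  imports Defs
begin

(* Stations first acquire distinct identifiers 0, ..., n - 1: a station without an identifier
   transmits with probability 1/2, and every successful slot hands out the next identifier. Then
   they serve the channel in round-robin order; the owner of a turn announces its queue length m and
   transmits exactly m packets, so that every slot is a success.
   Stability is an exponential drift argument. A potential combining the total backlog, the turns
   left in the current round and the packets that have to wait for the next round drops by one in
   every round-robin slot (the reset at the end of a round is absorbed) and by 1/theta in every
   successful setup slot, while an injected packet raises it by at most 2. Hence
   E exp (theta * potential) contracts by a factor rho < 1 per slot up to an additive constant, as
   soon as the exponential moment exp (lam * (exp (2 theta) - 1)) of the injections is close enough
   to 1, which lam < 1/e (indeed any rate below 2/5) guarantees for small theta. This bounds the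
   queues uniformly in time. The same argument for a variant of the potential, which charges n only
   while a fixed packet is late, shows that the probability that this packet is still queued k slots
   after its injection decays like rho^k, which bounds its expected latency. *)

lemma set_Pi_pmf_memD:
  assumes "finite A" "f \<in> set_pmf (Pi_pmf A d p)" "x \<in> A"
  shows "f x \<in> set_pmf (p x)"
  using assms by (auto simp: set_Pi_pmf PiE_dflt_def)

lemma nn_integral_const_pmf: "(\<integral>\<^sup>+x. c \<partial>measure_pmf p) = c"
  by (simp add: measure_pmf.emeasure_space_1)

lemma nn_integral_pmf_two_valued:
  fixes p :: "'a pmf" and c d :: real
  assumes "0 \<le> c" "0 \<le> d"
  shows "(\<integral>\<^sup>+x. ennreal (if x \<in> S then c else d) \<partial>p) =
         ennreal (c * measure_pmf.prob p S + d * (1 - measure_pmf.prob p S))"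
proof -
  have two_values: "\<And>x. ennreal (if x \<in> S then c else d) = ennreal c * indicator S x + ennreal d * indicator (- S) x"
    by (auto simp: indicator_def)
  have compl: "measure_pmf.prob p (- S) = 1 - measure_pmf.prob p S"
    using measure_pmf.prob_compl[of S p] by (simp add: Compl_eq_Diff_UNIV)
  have "(\<integral>\<^sup>+x. ennreal (if x \<in> S then c else d) \<partial>p) = ennreal c * emeasure p S + ennreal d * emeasure p (- S)"
    unfolding two_values by (simp add: nn_integral_add nn_integral_cmult_indicator)
  also have "\<dots> = ennreal (c * measure_pmf.prob p S) + ennreal (d * (1 - measure_pmf.prob p S))"
    using assms by (simp add: measure_pmf.emeasure_eq_measure compl ennreal_mult measure_pmf.prob_le_1)
  also have "\<dots> = ennreal (c * measure_pmf.prob p S + d * (1 - measure_pmf.prob p S))"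
    using assms by (intro ennreal_plus[symmetric]) (simp_all add: measure_pmf.prob_le_1)
  finally show ?thesis .
qed

lemma nn_integral_pmf_nested_mono:
  fixes h h' :: "'a \<Rightarrow> 'b \<Rightarrow> ennreal"
  assumes "\<And>a v. a \<in> set_pmf p \<Longrightarrow> h a v \<le> h' a v"
  shows "(\<integral>\<^sup>+a. \<integral>\<^sup>+v. h a v \<partial>q \<partial>p) \<le> (\<integral>\<^sup>+a. \<integral>\<^sup>+v. h' a v \<partial>q \<partial>p)"
  by (intro nn_integral_mono_AE) (auto simp: AE_measure_pmf_iff intro!: nn_integral_mono assms)

lemma nn_integral_pmf_nested_le_mult:
  fixes h :: "'a \<Rightarrow> 'b \<Rightarrow> ennreal"
  assumes "\<And>a v. a \<in> set_pmf p \<Longrightarrow> v \<in> set_pmf q \<Longrightarrow> h a v \<le> f a * g v"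
  shows "(\<integral>\<^sup>+a. \<integral>\<^sup>+v. h a v \<partial>q \<partial>p) \<le> (\<integral>\<^sup>+a. f a \<partial>p) * (\<integral>\<^sup>+v. g v \<partial>q)"
proof -
  have "(\<integral>\<^sup>+a. \<integral>\<^sup>+v. h a v \<partial>q \<partial>p) \<le> (\<integral>\<^sup>+a. \<integral>\<^sup>+v. f a * g v \<partial>q \<partial>p)"
    using assms by (intro nn_integral_mono_AE) (auto simp: AE_measure_pmf_iff intro!: nn_integral_mono_AE)
  also have "\<dots> = (\<integral>\<^sup>+a. f a \<partial>p) * (\<integral>\<^sup>+v. g v \<partial>q)"
    by (simp add: nn_integral_cmult nn_integral_multc)
  finally show ?thesis .
qed

lemma nn_integral_bind_pmf_le_affine:
  fixes q :: "'a \<Rightarrow> 'b pmf"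
  assumes "\<And>x. x \<in> set_pmf p \<Longrightarrow> (\<integral>\<^sup>+y. f y \<partial>q x) \<le> ennreal c * g x + b"
  shows "(\<integral>\<^sup>+y. f y \<partial>measure_pmf (p \<bind> q)) \<le> ennreal c * (\<integral>\<^sup>+x. g x \<partial>p) + b"
proof -
  have "(\<integral>\<^sup>+y. f y \<partial>measure_pmf (p \<bind> q)) \<le> (\<integral>\<^sup>+x. ennreal c * g x + b \<partial>p)"
    using assms by (simp add: AE_measure_pmf_iff nn_integral_mono_AE)
  also have "\<dots> = ennreal c * (\<integral>\<^sup>+x. g x \<partial>p) + b"
    by (simp add: nn_integral_add nn_integral_cmult nn_integral_const_pmf)
  finally show ?thesis .
qed

lemma exp_mult_max_le:
  fixes c x y :: real
  assumes "0 \<le> c"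
  shows "exp (c * max x y) \<le> exp (c * x) + exp (c * y)"
  using assms by (cases "x \<le> y") (auto simp: max_def mult_left_mono)

section \<open>Exponential moments of the injections\<close>

abbreviation injection_pmf :: "nat option pmf list \<Rightarrow> (nat \<Rightarrow> nat option) pmf" where
  "injection_pmf gs \<equiv> Pi_pmf {..<length gs} None (\<lambda>g. gs ! g)"

definition arrivals :: "nat option pmf list \<Rightarrow> (nat \<Rightarrow> nat option) \<Rightarrow> nat" where
  "arrivals gs v = (\<Sum>g<length gs. if v g \<noteq> None then 1 else 0)"

lemma nn_integral_injection_pmf_prod:
  assumes "0 \<le> w" "\<And>g. 0 \<le> d g"
  shows "(\<integral>\<^sup>+v. (\<Prod>g<length gs. ennreal (if v g \<in> {x. x \<noteq> None} then w else d g)) \<partial>injection_pmf gs)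
    = ennreal (\<Prod>g<length gs. w * measure_pmf.prob (gs ! g) {x. x \<noteq> None}
                                + d g * (1 - measure_pmf.prob (gs ! g) {x. x \<noteq> None}))"
proof -
  have "(\<integral>\<^sup>+v. (\<Prod>g<length gs. ennreal (if v g \<in> {x. x \<noteq> None} then w else d g)) \<partial>injection_pmf gs)
      = (\<Prod>g<length gs. \<integral>\<^sup>+x. ennreal (if x \<in> {x. x \<noteq> None} then w else d g) \<partial>(gs ! g))"
    by (rule nn_integral_prod_Pi_pmf) simp
  also have "\<dots> = (\<Prod>g<length gs. ennreal (w * measure_pmf.prob (gs ! g) {x. x \<noteq> None}
                                + d g * (1 - measure_pmf.prob (gs ! g) {x. x \<noteq> None})))"
    using assms by (intro prod.cong refl nn_integral_pmf_two_valued) simp_all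
  also have "\<dots> = ennreal (\<Prod>g<length gs. w * measure_pmf.prob (gs ! g) {x. x \<noteq> None}
                                + d g * (1 - measure_pmf.prob (gs ! g) {x. x \<noteq> None}))"
    using assms by (intro prod_ennreal) (simp add: measure_pmf.prob_le_1)
  finally show ?thesis .
qed

lemma exp_arrivals_eq_prod:
  "ennreal (exp (c * real (arrivals gs v))) =
     (\<Prod>g<length gs. ennreal (if v g \<in> {x. x \<noteq> None} then exp c else 1))"
proof -
  have "exp (c * real (arrivals gs v)) = (\<Prod>g<length gs. exp (if v g \<noteq> None then c else 0))"
    unfolding arrivals_def of_nat_sum sum_distrib_left exp_sum[OF finite_lessThan, symmetric]
    by (intro arg_cong[where f = exp] sum.cong) auto
  also have "\<dots> = (\<Prod>g<length gs. if v g \<in> {x. x \<noteq> None} then exp c else 1)"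
    by (intro prod.cong) auto
  finally show ?thesis by (subst prod_ennreal) auto
qed

lemma indicator_mult_exp_arrivals_eq_prod:
  assumes "g0 < length gs"
  shows "indicator {v. v g0 \<noteq> None} v * ennreal (exp (c * real (arrivals gs v))) =
     (\<Prod>g<length gs. ennreal (if v g \<in> {x. x \<noteq> None} then exp c else if g = g0 then 0 else 1))"
proof (cases "v g0 = None")
  case True
  then show ?thesis using assms by (auto intro!: prod_zero bexI[of _ g0])
next
  case False
  then show ?thesis unfolding exp_arrivals_eq_prod by (auto intro!: prod.cong)
qed

lemma exp_moment_arrivals:
  assumes "0 \<le> c"
  shows "(\<integral>\<^sup>+v. ennreal (exp (c * real (arrivals gs v))) \<partial>injection_pmf gs)
           \<le> ennreal (exp (inj_rate gs * (exp c - 1)))"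
proof -
  let ?p = "\<lambda>g. measure_pmf.prob (gs ! g) {x. x \<noteq> None}"
  have "(\<integral>\<^sup>+v. ennreal (exp (c * real (arrivals gs v))) \<partial>injection_pmf gs)
      = ennreal (\<Prod>g<length gs. exp c * ?p g + 1 * (1 - ?p g))"
    unfolding exp_arrivals_eq_prod by (rule nn_integral_injection_pmf_prod) simp_all
  also have "\<dots> \<le> ennreal (\<Prod>g<length gs. exp (?p g * (exp c - 1)))"
  proof (intro ennreal_leI prod_mono conjI)
    fix g
    show "0 \<le> exp c * ?p g + 1 * (1 - ?p g)" by (simp add: measure_pmf.prob_le_1)
    have "exp c * ?p g + 1 * (1 - ?p g) = 1 + ?p g * (exp c - 1)" by (simp add: algebra_simps)
    also have "\<dots> \<le> exp (?p g * (exp c - 1))" by (rule exp_ge_add_one_self)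
    finally show "exp c * ?p g + 1 * (1 - ?p g) \<le> exp (?p g * (exp c - 1))" .
  qed
  also have "\<dots> = ennreal (exp (inj_rate gs * (exp c - 1)))"
    by (simp add: inj_rate_def exp_sum sum_distrib_right)
  finally show ?thesis .
qed

lemma exp_moment_arrivals_injected:
  assumes "0 \<le> c" and g0: "g0 < length gs"
  shows "(\<integral>\<^sup>+v. indicator {v. v g0 \<noteq> None} v * ennreal (exp (c * real (arrivals gs v))) \<partial>injection_pmf gs)
    \<le> ennreal (measure_pmf.prob (gs ! g0) {x. x \<noteq> None} * exp c * exp (inj_rate gs * (exp c - 1)))"
proof -
  let ?p = "\<lambda>g. measure_pmf.prob (gs ! g) {x. x \<noteq> None}"
  let ?d = "\<lambda>g. if g = g0 then 0 else 1 :: real"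
  have "(\<integral>\<^sup>+v. indicator {v. v g0 \<noteq> None} v * ennreal (exp (c * real (arrivals gs v))) \<partial>injection_pmf gs)
      = ennreal (\<Prod>g<length gs. exp c * ?p g + ?d g * (1 - ?p g))"
    unfolding indicator_mult_exp_arrivals_eq_prod[OF g0]
    by (rule nn_integral_injection_pmf_prod[where d = ?d]) simp_all
  also have "\<dots> \<le> ennreal (\<Prod>g<length gs. (if g = g0 then ?p g0 * exp c else 1) * exp (?p g * (exp c - 1)))"
  proof (intro ennreal_leI prod_mono conjI)
    fix g
    show "0 \<le> exp c * ?p g + ?d g * (1 - ?p g)" by (simp add: measure_pmf.prob_le_1)
    have "1 \<le> exp (?p g * (exp c - 1))" using assms(1) by simp
    moreover have "exp c * ?p g + 1 * (1 - ?p g) \<le> exp (?p g * (exp c - 1))"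
      using exp_ge_add_one_self[of "?p g * (exp c - 1)"] by (simp add: algebra_simps del: exp_ge_add_one_self)
    ultimately show "exp c * ?p g + ?d g * (1 - ?p g) \<le> (if g = g0 then ?p g0 * exp c else 1) * exp (?p g * (exp c - 1))"
      by (auto simp: mult.commute intro: order_trans[OF _ mult_left_mono[of 1]])
  qed
  also have "\<dots> = ennreal (?p g0 * exp c * exp (inj_rate gs * (exp c - 1)))"
    using g0 by (simp add: prod.distrib exp_sum sum_distrib_right prod.delta inj_rate_def)
  finally show ?thesis .
qed

section \<open>The protocol\<close>

(* Setup k me: k identifiers have been handed out so far; the station has identifier me - 1,
   or none if me = 0. Frame i j r: the station has identifier i and the station with identifier j
   holds the turn; with r = 0 the owner is at the start of its turn and its transmission announces
   its queue length m, otherwise r more slots of the turn remain. *)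
datatype station_state = Setup nat nat | Frame nat nat nat

instance station_state :: countable by countable_datatype

definition fair_coin :: "nat option pmf" where
  "fair_coin = map_pmf (\<lambda>b. if b then Some 0 else None) (bernoulli_pmf (1/2))"

fun station_act :: "station_state \<Rightarrow> nat \<Rightarrow> nat option pmf" where
  "station_act (Setup k me) q = (if me = 0 then fair_coin else return_pmf None)"
| "station_act (Frame i j r) q = return_pmf (if i = j then Some (if r = 0 then q else 0) else None)"

definition cyclic_succ :: "nat \<Rightarrow> nat \<Rightarrow> nat" where
  "cyclic_succ n j = (if Suc j = n then 0 else Suc j)"

definition frame_advance :: "nat \<Rightarrow> nat \<Rightarrow> nat \<Rightarrow> nat \<Rightarrow> nat \<times> nat" where
  "frame_advance n j r m =
     (if r = 0 then (if 2 \<le> m then (j, m - 1) else (cyclic_succ n j, 0))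
      else if r = 1 then (cyclic_succ n j, 0) else (j, r - 1))"

fun station_upd :: "nat \<Rightarrow> station_state \<Rightarrow> nat option \<Rightarrow> nat option \<Rightarrow> station_state" where
  "station_upd n (Setup k me) a None = Setup k me"
| "station_upd n (Setup k me) a (Some m) =
     (let me' = (if me = 0 \<and> a \<noteq> None then Suc k else me) in
      if Suc k = n then Frame (me' - 1) 0 0 else Setup (Suc k) me')"
| "station_upd n (Frame i j r) a None = Frame i j r"
| "station_upd n (Frame i j r) a (Some m) = Frame i (fst (frame_advance n j r m)) (snd (frame_advance n j r m))"

definition rr_protocol :: "nat \<Rightarrow> mac_protocol" where
  "rr_protocol n = \<lparr>mp_init = to_nat (Setup 0 0),
                    mp_act = (\<lambda>s q. station_act (from_nat s) q),
                    mp_upd = (\<lambda>s a fb k. to_nat (station_upd n (from_nat s) a fb))\<rparr>"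

definition local_state :: "gstate \<Rightarrow> nat \<Rightarrow> station_state" where
  "local_state \<sigma> i = from_nat (fst (\<sigma> i))"

lemma set_pmf_fair_coin: "set_pmf fair_coin = {Some 0, None}"
  by (auto simp: fair_coin_def set_pmf_bernoulli)

lemma pmf_fair_coin: "pmf fair_coin (Some 0) = 1/2" "pmf fair_coin None = 1/2"
proof -
  have "{x. x} = {True}" "{x. \<not> x} = {False}" by auto
  then show "pmf fair_coin (Some 0) = 1/2" "pmf fair_coin None = 1/2"
    by (auto simp: fair_coin_def pmf_map vimage_def measure_pmf_single)
qed

abbreviation action_pmf :: "mac_protocol \<Rightarrow> nat \<Rightarrow> gstate \<Rightarrow> (nat \<Rightarrow> nat option) pmf" where
  "action_pmf P n \<sigma> \<equiv> Pi_pmf {..<n} None (\<lambda>i. mp_act P (fst (\<sigma> i)) (length (snd (\<sigma> i))))"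

definition slot_result :: "mac_protocol \<Rightarrow> nat \<Rightarrow> nat option pmf list \<Rightarrow> nat \<Rightarrow> gstate
     \<Rightarrow> (nat \<Rightarrow> nat option) \<Rightarrow> (nat \<Rightarrow> nat option) \<Rightarrow> gstate" where
  "slot_result P n gs t \<sigma> a v =
     (let T = {i. i < n \<and> a i \<noteq> None};
          fb = (if card T = 1 then a (the_elem T) else None)
      in (\<lambda>i. if i < n then
            (mp_upd P (fst (\<sigma> i)) (a i) fb (card {g. g < length gs \<and> v g = Some i}),
             (if T = {i} then tl (snd (\<sigma> i)) else snd (\<sigma> i))
               @ map (\<lambda>g. (t, g)) (filter (\<lambda>g. v g = Some i) [0..<length gs]))
          else \<sigma> i))"

lemma mac_step_eq_slot_result:
  "mac_step P n gs t \<sigma> =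
     action_pmf P n \<sigma> \<bind> (\<lambda>a. injection_pmf gs \<bind> (\<lambda>v. return_pmf (slot_result P n gs t \<sigma> a v)))"
  unfolding mac_step_def slot_result_def by (simp add: Let_def)

lemma nn_integral_mac_step:
  "(\<integral>\<^sup>+x. h x \<partial>mac_step P n gs t \<sigma>) =
     (\<integral>\<^sup>+a. \<integral>\<^sup>+v. h (slot_result P n gs t \<sigma> a v) \<partial>injection_pmf gs \<partial>action_pmf P n \<sigma>)"
  unfolding mac_step_eq_slot_result by simp

lemma set_pmf_mac_step:
  "set_pmf (mac_step P n gs t \<sigma>) =
     (\<Union>a\<in>set_pmf (action_pmf P n \<sigma>). \<Union>v\<in>set_pmf (injection_pmf gs). {slot_result P n gs t \<sigma> a v})"
  unfolding mac_step_eq_slot_result by simp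

lemma queue_slot_result:
  "i < n \<Longrightarrow> snd (slot_result P n gs t \<sigma> a v i) =
     (if {i. i < n \<and> a i \<noteq> None} = {i} then tl (snd (\<sigma> i)) else snd (\<sigma> i))
       @ map (\<lambda>g. (t, g)) (filter (\<lambda>g. v g = Some i) [0..<length gs])"
  by (simp add: slot_result_def Let_def)

lemma set_queue_slot_result:
  assumes "i < n"
  shows "set (snd (slot_result P n gs t \<sigma> a v i)) \<subseteq> set (snd (\<sigma> i)) \<union> {(t, g) |g. v g = Some i}"
proof -
  have "set (tl xs) \<subseteq> set xs" for xs :: "pkt list" by (cases xs) auto
  then show ?thesis unfolding queue_slot_result[OF assms] by auto
qed

lemma local_state_slot_result:
  "i < n \<Longrightarrow> local_state (slot_result (rr_protocol n) n gs t \<sigma> a v) i =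
     station_upd n (local_state \<sigma> i) (a i)
       (let T = {i. i < n \<and> a i \<noteq> None} in if card T = 1 then a (the_elem T) else None)"
  by (simp add: slot_result_def local_state_def rr_protocol_def Let_def)

definition arrivals_at :: "nat option pmf list \<Rightarrow> (nat \<Rightarrow> nat option) \<Rightarrow> nat \<Rightarrow> nat" where
  "arrivals_at gs v i = length (filter (\<lambda>g. v g = Some i) [0..<length gs])"

lemma sum_arrivals_at_le: "(\<Sum>i<n. arrivals_at gs v i) \<le> arrivals gs v"
proof -
  have len: "length (filter P [0..<m]) = (\<Sum>g<m. if P g then 1 else 0)" for P m
    by (induction m) auto
  have "(\<Sum>i<n. arrivals_at gs v i) = (\<Sum>g<length gs. \<Sum>i<n. if v g = Some i then 1 else 0)"
    unfolding arrivals_at_def len by (rule sum.swap)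
  also have "\<dots> \<le> arrivals gs v"
    unfolding arrivals_def by (intro sum_mono) (auto simp: sum.delta' split: option.split)
  finally show ?thesis .
qed

definition backlog :: "nat \<Rightarrow> gstate \<Rightarrow> nat" where
  "backlog n \<sigma> = (\<Sum>i<n. length (snd (\<sigma> i)))"

lemma backlog_slot_result_le:
  "real (backlog n (slot_result P n gs t \<sigma> a v)) \<le> real (backlog n \<sigma>) + real (arrivals gs v)"
proof -
  have "backlog n (slot_result P n gs t \<sigma> a v) \<le> (\<Sum>i<n. length (snd (\<sigma> i)) + arrivals_at gs v i)"
    unfolding backlog_def by (intro sum_mono) (auto simp: queue_slot_result arrivals_at_def)
  also have "\<dots> \<le> backlog n \<sigma> + arrivals gs v"
    unfolding sum.distrib backlog_def using sum_arrivals_at_le[where n = n and gs = gs and v = v] by simp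
  finally show ?thesis by (simp only: of_nat_add[symmetric] of_nat_le_iff)
qed

lemma backlog_slot_result_eq:
  assumes "\<And>i. i < n \<Longrightarrow> snd (\<sigma>' i) = (if i = J then tl (snd (\<sigma> i)) else snd (\<sigma> i))
         @ map (\<lambda>g. (t, g)) (filter (\<lambda>g. v g = Some i) [0..<length gs])"
    and "J < n"
  shows "real (backlog n \<sigma>') =
           real (backlog n \<sigma>) - (if snd (\<sigma> J) \<noteq> [] then 1 else 0) + real (\<Sum>i<n. arrivals_at gs v i)"
proof -
  have "real (backlog n \<sigma>') = (\<Sum>i<n. real (length (snd (\<sigma> i)))
          - (if i = J then (if snd (\<sigma> J) \<noteq> [] then 1 else 0) else 0) + real (arrivals_at gs v i))"
    unfolding backlog_def of_nat_sum using assms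
    by (intro sum.cong) (auto simp: arrivals_at_def of_nat_diff Suc_le_eq)
  also have "\<dots> = real (backlog n \<sigma>) - (if snd (\<sigma> J) \<noteq> [] then 1 else 0) + real (\<Sum>i<n. arrivals_at gs v i)"
    unfolding backlog_def of_nat_sum sum.distrib sum_subtractf using assms(2) by (simp add: sum.delta)
  finally show ?thesis .
qed

lemma frame_slot_result:
  assumes frame: "\<forall>i<n. local_state \<sigma> i = Frame (ids i) j r"
    and bij: "bij_betw ids {..<n} {..<n}"
    and owner: "J < n" "ids J = j"
    and a: "a \<in> set_pmf (action_pmf (rr_protocol n) n \<sigma>)"
    and i: "i < n"
  shows "local_state (slot_result (rr_protocol n) n gs t \<sigma> a v) i =
           Frame (ids i) (fst (frame_advance n j r (if r = 0 then length (snd (\<sigma> J)) else 0)))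
                         (snd (frame_advance n j r (if r = 0 then length (snd (\<sigma> J)) else 0)))"
    and "snd (slot_result (rr_protocol n) n gs t \<sigma> a v i) =
           (if i = J then tl (snd (\<sigma> i)) else snd (\<sigma> i))
             @ map (\<lambda>g. (t, g)) (filter (\<lambda>g. v g = Some i) [0..<length gs])"
proof -
  have owner_iff: "\<And>i. i < n \<Longrightarrow> ids i = j \<longleftrightarrow> i = J"
    using bij owner unfolding bij_betw_def inj_on_def by auto
  have act: "a i = (if i = J then Some (if r = 0 then length (snd (\<sigma> J)) else 0) else None)"
    if "i < n" for i
  proof -
    have "a i \<in> set_pmf (mp_act (rr_protocol n) (fst (\<sigma> i)) (length (snd (\<sigma> i))))"
      using set_Pi_pmf_memD[OF finite_lessThan a] that by blast
    then show ?thesis using frame that owner_iff[OF that] by (auto simp: rr_protocol_def local_state_def)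
  qed
  have transmitters: "{i. i < n \<and> a i \<noteq> None} = {J}" using act owner by (auto split: if_splits)
  show "local_state (slot_result (rr_protocol n) n gs t \<sigma> a v) i =
           Frame (ids i) (fst (frame_advance n j r (if r = 0 then length (snd (\<sigma> J)) else 0)))
                         (snd (frame_advance n j r (if r = 0 then length (snd (\<sigma> J)) else 0)))"
    using local_state_slot_result[OF i] transmitters frame i act[OF owner(1)] by simp
  show "snd (slot_result (rr_protocol n) n gs t \<sigma> a v i) =
           (if i = J then tl (snd (\<sigma> i)) else snd (\<sigma> i))
             @ map (\<lambda>g. (t, g)) (filter (\<lambda>g. v g = Some i) [0..<length gs])"
    using queue_slot_result[OF i] transmitters by auto
qed

lemma setup_action:
  assumes in_setup: "\<forall>i<n. local_state \<sigma> i = Setup k (me i)"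
    and a: "a \<in> set_pmf (action_pmf (rr_protocol n) n \<sigma>)"
    and i: "i < n"
  shows "a i \<in> (if me i = 0 then {Some 0, None} else {None})"
proof -
  have "a i \<in> set_pmf (mp_act (rr_protocol n) (fst (\<sigma> i)) (length (snd (\<sigma> i))))"
    using set_Pi_pmf_memD[OF finite_lessThan a] i by blast
  then show ?thesis using in_setup i by (auto simp: rr_protocol_def local_state_def set_pmf_fair_coin)
qed

lemma setup_slot_success:
  assumes in_setup: "\<forall>i<n. local_state \<sigma> i = Setup k (me i)"
    and a: "a \<in> set_pmf (action_pmf (rr_protocol n) n \<sigma>)"
    and success: "{i. i < n \<and> a i \<noteq> None} = {i0}"
  shows "me i0 = 0"
    and "i < n \<Longrightarrow> local_state (slot_result (rr_protocol n) n gs t \<sigma> a v) i =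
      (if Suc k = n then Frame ((me(i0 := Suc k)) i - 1) 0 0 else Setup (Suc k) ((me(i0 := Suc k)) i))"
proof -
  have i0: "i0 < n" "a i0 \<noteq> None" using success by auto
  then show me0: "me i0 = 0" using setup_action[OF in_setup a i0(1)] by (auto split: if_splits)
  have a0: "a i0 = Some 0" using setup_action[OF in_setup a i0(1)] i0(2) me0 by simp
  assume i: "i < n"
  have "a i \<noteq> None \<longleftrightarrow> i = i0" using success i by auto
  then show "local_state (slot_result (rr_protocol n) n gs t \<sigma> a v) i =
      (if Suc k = n then Frame ((me(i0 := Suc k)) i - 1) 0 0 else Setup (Suc k) ((me(i0 := Suc k)) i))"
    using local_state_slot_result[OF i] success in_setup i a0 me0 by (auto simp: Let_def)
qed

lemma setup_slot_failure:
  assumes "\<forall>i<n. local_state \<sigma> i = Setup k (me i)"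
    and "card {i. i < n \<and> a i \<noteq> None} \<noteq> 1"
    and "i < n"
  shows "local_state (slot_result (rr_protocol n) n gs t \<sigma> a v) i = Setup k (me i)"
  using local_state_slot_result[OF assms(3)] assms by (auto simp: Let_def)

lemma assign_fresh_id:
  fixes me :: "nat \<Rightarrow> nat"
  assumes le: "\<forall>i<n. me i \<le> k" and inj: "inj_on me {i. i < n \<and> me i \<noteq> 0}"
    and card: "card {i. i < n \<and> me i \<noteq> 0} = k" and i0: "i0 < n" "me i0 = 0"
  shows "\<forall>i<n. (me(i0 := Suc k)) i \<le> Suc k"
    and "inj_on (me(i0 := Suc k)) {i. i < n \<and> (me(i0 := Suc k)) i \<noteq> 0}"
    and "card {i. i < n \<and> (me(i0 := Suc k)) i \<noteq> 0} = Suc k"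
proof -
  have ids: "{i. i < n \<and> (me(i0 := Suc k)) i \<noteq> 0} = insert i0 {i. i < n \<and> me i \<noteq> 0}"
    using i0 by auto
  show "\<forall>i<n. (me(i0 := Suc k)) i \<le> Suc k" using le by auto
  have "inj_on (me(i0 := Suc k)) {i. i < n \<and> me i \<noteq> 0}"
    using inj i0(2) by (auto simp: inj_on_def)
  moreover have "(me(i0 := Suc k)) i0 \<notin> (me(i0 := Suc k)) ` ({i. i < n \<and> me i \<noteq> 0} - {i0})"
    using le by (auto simp: image_iff)
  ultimately show "inj_on (me(i0 := Suc k)) {i. i < n \<and> (me(i0 := Suc k)) i \<noteq> 0}"
    unfolding ids inj_on_insert by blast
  show "card {i. i < n \<and> (me(i0 := Suc k)) i \<noteq> 0} = Suc k"
    unfolding ids using card i0(2) by (subst card_insert_disjoint) auto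
qed

lemma bij_betw_assigned_ids:
  fixes me :: "nat \<Rightarrow> nat"
  assumes le: "\<forall>i<n. me i \<le> n" and inj: "inj_on me {i. i < n \<and> me i \<noteq> 0}"
    and card: "card {i. i < n \<and> me i \<noteq> 0} = n"
  shows "bij_betw (\<lambda>i. me i - 1) {..<n} {..<n}"
proof -
  have all: "{i. i < n \<and> me i \<noteq> 0} = {..<n}"
    using card by (intro card_subset_eq) auto
  have "inj_on (\<lambda>i. me i - 1) {..<n}"
  proof (rule inj_onI)
    fix x y assume "x \<in> {..<n}" "y \<in> {..<n}" "me x - 1 = me y - 1"
    moreover have "me x \<noteq> 0" "me y \<noteq> 0" using all calculation(1,2) by blast+
    ultimately show "x = y" using inj all by (auto simp: inj_on_def)
  qed
  moreover have "(\<lambda>i. me i - 1) ` {..<n} \<subseteq> {..<n}"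
    using le all by force
  ultimately show ?thesis
    unfolding bij_betw_def using endo_inj_surj[OF finite_lessThan] by blast
qed

definition setup_inv :: "nat \<Rightarrow> gstate \<Rightarrow> bool" where
  "setup_inv n \<sigma> \<longleftrightarrow> (\<exists>k me. k < n \<and> (\<forall>i<n. local_state \<sigma> i = Setup k (me i)) \<and> (\<forall>i<n. me i \<le> k)
      \<and> inj_on me {i. i < n \<and> me i \<noteq> 0} \<and> card {i. i < n \<and> me i \<noteq> 0} = k)"

definition frame_inv :: "nat \<Rightarrow> gstate \<Rightarrow> bool" where
  "frame_inv n \<sigma> \<longleftrightarrow> (\<exists>j r ids. j < n \<and> (\<forall>i<n. local_state \<sigma> i = Frame (ids i) j r)
      \<and> bij_betw ids {..<n} {..<n} \<and> (\<forall>i<n. ids i = j \<longrightarrow> r \<le> length (snd (\<sigma> i))))"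

definition protocol_inv :: "nat \<Rightarrow> nat \<Rightarrow> gstate \<Rightarrow> bool" where
  "protocol_inv n t \<sigma> \<longleftrightarrow> (\<forall>i<n. \<forall>x\<in>set (snd (\<sigma> i)). fst x < t) \<and> (setup_inv n \<sigma> \<or> frame_inv n \<sigma>)"

lemma cyclic_succ_less: "j < n \<Longrightarrow> cyclic_succ n j < n"
  by (auto simp: cyclic_succ_def)

lemma frame_inv_step:
  assumes "frame_inv n \<sigma>" and a: "a \<in> set_pmf (action_pmf (rr_protocol n) n \<sigma>)"
  shows "frame_inv n (slot_result (rr_protocol n) n gs t \<sigma> a v)"
proof -
  obtain j r ids where j: "j < n" and frame: "\<forall>i<n. local_state \<sigma> i = Frame (ids i) j r"
    and bij: "bij_betw ids {..<n} {..<n}" and quota: "\<forall>i<n. ids i = j \<longrightarrow> r \<le> length (snd (\<sigma> i))"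
    using assms(1) unfolding frame_inv_def by blast
  obtain J where owner: "J < n" "ids J = j"
    using bij j unfolding bij_betw_def by (metis imageE lessThan_iff)
  have owner_iff: "\<And>i. i < n \<Longrightarrow> ids i = j \<longleftrightarrow> i = J"
    using bij owner unfolding bij_betw_def inj_on_def by auto
  define m where "m = (if r = 0 then length (snd (\<sigma> J)) else 0)"
  define j' where "j' = fst (frame_advance n j r m)"
  define r' where "r' = snd (frame_advance n j r m)"
  note next_state = frame_slot_result[OF frame bij owner a, of _ gs t v]
  have "j' < n" using j cyclic_succ_less[OF j] by (auto simp: j'_def frame_advance_def)
  moreover have "\<forall>i<n. local_state (slot_result (rr_protocol n) n gs t \<sigma> a v) i = Frame (ids i) j' r'"
    using next_state(1) by (simp add: j'_def r'_def m_def)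
  moreover have "r' \<le> length (snd (slot_result (rr_protocol n) n gs t \<sigma> a v i))"
    if "i < n" "ids i = j'" for i
  proof (cases "r' = 0")
    case False
    then have "j' = j" and "r' = (if r = 0 then length (snd (\<sigma> J)) - 1 else r - 1)"
      by (auto simp: r'_def j'_def frame_advance_def m_def split: if_splits)
    then show ?thesis using next_state(2) that owner_iff quota owner by auto
  qed simp
  ultimately show ?thesis unfolding frame_inv_def using bij by blast
qed

lemma setup_inv_step:
  assumes "setup_inv n \<sigma>" and a: "a \<in> set_pmf (action_pmf (rr_protocol n) n \<sigma>)"
  shows "setup_inv n (slot_result (rr_protocol n) n gs t \<sigma> a v) \<or> frame_inv n (slot_result (rr_protocol n) n gs t \<sigma> a v)"
proof -
  obtain k me where k: "k < n" and in_setup: "\<forall>i<n. local_state \<sigma> i = Setup k (me i)"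
    and le: "\<forall>i<n. me i \<le> k" and inj: "inj_on me {i. i < n \<and> me i \<noteq> 0}"
    and card: "card {i. i < n \<and> me i \<noteq> 0} = k"
    using assms(1) unfolding setup_inv_def by blast
  let ?\<sigma>' = "slot_result (rr_protocol n) n gs t \<sigma> a v"
  show ?thesis
  proof (cases "card {i. i < n \<and> a i \<noteq> None} = 1")
    case False
    then have "\<forall>i<n. local_state ?\<sigma>' i = Setup k (me i)"
      using setup_slot_failure[OF in_setup] by blast
    then show ?thesis unfolding setup_inv_def using k le inj card by blast
  next
    case True
    then obtain i0 where success: "{i. i < n \<and> a i \<noteq> None} = {i0}" by (meson card_1_singletonE)
    have i0: "i0 < n" "me i0 = 0" using success setup_slot_success(1)[OF in_setup a success] by auto
    note me' = assign_fresh_id[OF le inj card i0]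
    note next_state = setup_slot_success(2)[OF in_setup a success]
    show ?thesis
    proof (cases "Suc k = n")
      case False
      then have "\<forall>i<n. local_state ?\<sigma>' i = Setup (Suc k) ((me(i0 := Suc k)) i)"
        using next_state by simp
      moreover have "Suc k < n" using k False by simp
      ultimately have "setup_inv n ?\<sigma>'"
        unfolding setup_inv_def using me' by blast
      then show ?thesis ..
    next
      case True
      then have "bij_betw (\<lambda>i. (me(i0 := Suc k)) i - 1) {..<n} {..<n}"
        using me' True by (intro bij_betw_assigned_ids) (simp_all only:)
      moreover have "\<forall>i<n. local_state ?\<sigma>' i = Frame ((me(i0 := Suc k)) i - 1) 0 0"
        using next_state True by simp
      ultimately have "frame_inv n ?\<sigma>'"
        unfolding frame_inv_def using k by (intro exI[of _ 0] exI[of _ 0] exI conjI) auto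
      then show ?thesis ..
    qed
  qed
qed

lemma protocol_inv_step:
  assumes "protocol_inv n t \<sigma>" "\<sigma>' \<in> set_pmf (mac_step (rr_protocol n) n gs t \<sigma>)"
  shows "protocol_inv n (Suc t) \<sigma>'"
proof -
  obtain a v where a: "a \<in> set_pmf (action_pmf (rr_protocol n) n \<sigma>)"
    and \<sigma>': "\<sigma>' = slot_result (rr_protocol n) n gs t \<sigma> a v"
    using assms(2) unfolding set_pmf_mac_step by blast
  have "\<forall>i<n. \<forall>x\<in>set (snd (\<sigma>' i)). fst x < Suc t"
    using assms(1) set_queue_slot_result unfolding \<sigma>' protocol_inv_def by fastforce
  moreover have "setup_inv n \<sigma>' \<or> frame_inv n \<sigma>'"
    using assms(1) setup_inv_step[OF _ a] frame_inv_step[OF _ a] unfolding \<sigma>' protocol_inv_def by blast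
  ultimately show ?thesis by (simp add: protocol_inv_def)
qed

lemma protocol_inv_mac_run:
  assumes "0 < n" "\<sigma> \<in> set_pmf (mac_run (rr_protocol n) n gs t)"
  shows "protocol_inv n t \<sigma>"
  using assms(2)
proof (induction t arbitrary: \<sigma>)
  case 0
  then have "\<sigma> = (\<lambda>i. (to_nat (Setup 0 0), []))" by (simp add: rr_protocol_def)
  then show ?case unfolding protocol_inv_def setup_inv_def using assms(1)
    by (intro conjI disjI1 exI[of _ 0] exI[of _ "\<lambda>_. 0"]) (auto simp: local_state_def)
next
  case (Suc t)
  then show ?case by (auto intro: protocol_inv_step)
qed

section \<open>The potential\<close>

fun own_id :: "station_state \<Rightarrow> nat" where
  "own_id (Frame i j r) = i"
| "own_id (Setup k me) = 0"

(* In round-robin state (j, r), the stations whose turn has begun (turn_taken) get only their first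
   turn_quota packets served in the current round; the remaining ones are late and wait for the
   next round. *)
definition turn_taken :: "nat \<Rightarrow> nat \<Rightarrow> nat \<Rightarrow> bool" where
  "turn_taken j r x \<longleftrightarrow> x < j \<or> (x = j \<and> 0 < r)"

definition turn_quota :: "nat \<Rightarrow> nat \<Rightarrow> nat \<Rightarrow> nat" where
  "turn_quota j r x = (if x = j then r else 0)"

definition turns_left :: "nat \<Rightarrow> nat \<Rightarrow> nat \<Rightarrow> nat" where
  "turns_left n j r = (if r = 0 then n - j else n - j - 1)"

definition late_backlog :: "nat \<Rightarrow> nat \<Rightarrow> nat \<Rightarrow> gstate \<Rightarrow> nat" where
  "late_backlog n j r \<sigma> = (\<Sum>i<n. if turn_taken j r (own_id (local_state \<sigma> i))
      then length (snd (\<sigma> i)) - turn_quota j r (own_id (local_state \<sigma> i)) else 0)"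

definition tag_late :: "nat \<Rightarrow> nat \<Rightarrow> nat \<Rightarrow> pkt \<Rightarrow> gstate \<Rightarrow> bool" where
  "tag_late n j r tag \<sigma> \<longleftrightarrow> (\<exists>i<n. turn_taken j r (own_id (local_state \<sigma> i))
      \<and> tag \<in> set (drop (turn_quota j r (own_id (local_state \<sigma> i))) (snd (\<sigma> i))))"

(* During setup every successful slot lowers M * (n - k) by M, and the offset n + 1 makes the
   setup potential dominate the round-robin potential of the first round. Within a round each slot
   lowers backlog + turns_left by one; the reset of turns_left to n at the end of a round is paid
   by min n late_backlog, unless the whole backlog is below n. *)
definition potential :: "nat \<Rightarrow> real \<Rightarrow> gstate \<Rightarrow> real" where
  "potential n M \<sigma> = (case local_state \<sigma> 0 of
       Setup k me \<Rightarrow> real (backlog n \<sigma>) + M * real (n - k) + real n + 1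
     | Frame i j r \<Rightarrow> real (turns_left n j r) + real (backlog n \<sigma>) + real (min n (late_backlog n j r \<sigma>)))"

definition tag_potential :: "nat \<Rightarrow> real \<Rightarrow> pkt \<Rightarrow> gstate \<Rightarrow> real" where
  "tag_potential n M tag \<sigma> = (case local_state \<sigma> 0 of
       Setup k me \<Rightarrow> real (backlog n \<sigma>) + M * real (n - k) + real n + 1
     | Frame i j r \<Rightarrow> real (turns_left n j r) + real (backlog n \<sigma>) + (if tag_late n j r tag \<sigma> then real n else 0))"

lemma potential_nonneg: "0 \<le> M \<Longrightarrow> 0 \<le> potential n M \<sigma>"
  by (cases "local_state \<sigma> 0") (auto simp: potential_def)

lemma tag_potential_nonneg: "0 \<le> M \<Longrightarrow> 0 \<le> tag_potential n M tag \<sigma>"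
  by (cases "local_state \<sigma> 0") (auto simp: tag_potential_def)

lemma backlog_le_potential: "0 \<le> M \<Longrightarrow> real (backlog n \<sigma>) \<le> potential n M \<sigma>"
  by (cases "local_state \<sigma> 0") (auto simp: potential_def)

lemma tag_potential_le_potential: "0 \<le> M \<Longrightarrow> tag_potential n M tag \<sigma> \<le> potential n M \<sigma> + real n"
  by (cases "local_state \<sigma> 0") (auto simp: tag_potential_def potential_def)

lemma potential_Frame:
  assumes "0 < n" "\<forall>i<n. local_state \<sigma> i = Frame (ids i) j r"
  shows "potential n M \<sigma> = real (turns_left n j r) + real (backlog n \<sigma>) + real (min n (late_backlog n j r \<sigma>))"
    and "tag_potential n M tag \<sigma> =
           real (turns_left n j r) + real (backlog n \<sigma>) + (if tag_late n j r tag \<sigma> then real n else 0)"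
    and "late_backlog n j r \<sigma> =
           (\<Sum>i<n. if turn_taken j r (ids i) then length (snd (\<sigma> i)) - turn_quota j r (ids i) else 0)"
    and "tag_late n j r tag \<sigma> \<longleftrightarrow>
           (\<exists>i<n. turn_taken j r (ids i) \<and> tag \<in> set (drop (turn_quota j r (ids i)) (snd (\<sigma> i))))"
  using assms by (auto simp: potential_def tag_potential_def late_backlog_def tag_late_def intro!: sum.cong)

lemma late_count_frame_advance:
  assumes "j < n" "x < n" "x = j \<longleftrightarrow> isJ" "isJ \<longrightarrow> r \<le> length q"
    and "q' = (if isJ then tl q else q) @ ys" "isJ \<longrightarrow> Q = length q"
    and "(j', r') = frame_advance n j r (if r = 0 then Q else 0)"
    and "\<not> (Suc j = n \<and> (r = 1 \<or> (r = 0 \<and> Q \<le> 1)))"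
  shows "(if turn_taken j' r' x then length q' - turn_quota j' r' x else 0)
           \<le> (if turn_taken j r x then length q - turn_quota j r x else 0) + length ys"
proof -
  have "\<not> 2 \<le> length q \<Longrightarrow> tl q = []" by (cases q) (auto simp: Suc_le_eq)
  then show ?thesis using assms
    by (auto simp: frame_advance_def cyclic_succ_def turn_taken_def turn_quota_def split: if_splits)
qed

lemma late_tag_frame_advance:
  assumes "j < n" "x < n" "x = j \<longleftrightarrow> isJ" "isJ \<longrightarrow> r \<le> length q"
    and q': "q' = (if isJ then tl q else q) @ ys" and "isJ \<longrightarrow> Q = length q"
    and "(j', r') = frame_advance n j r (if r = 0 then Q else 0)"
    and "\<not> (Suc j = n \<and> (r = 1 \<or> (r = 0 \<and> Q \<le> 1)))"
    and tag: "tag \<notin> set ys" "turn_taken j' r' x" "tag \<in> set (drop (turn_quota j' r' x) q')"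
  shows "turn_taken j r x \<and> tag \<in> set (drop (turn_quota j r x) q)"
proof -
  have old: "tag \<in> set (drop (turn_quota j' r' x) (if isJ then tl q else q))"
    using tag unfolding q' by (auto simp: drop_append dest: in_set_dropD)
  have "0 < r \<Longrightarrow> drop (r - 1) (tl q) = drop r q" by (cases r) (auto simp: drop_Suc)
  then show ?thesis using assms old
    by (cases isJ; cases "r = 0")
       (auto simp: frame_advance_def cyclic_succ_def turn_taken_def turn_quota_def drop_Suc split: if_splits)
qed

locale frame_slot =
  fixes n :: nat and gs :: "nat option pmf list" and t :: nat and \<sigma> :: gstate
    and a v :: "nat \<Rightarrow> nat option" and ids :: "nat \<Rightarrow> nat" and j r J :: nat
  assumes frame: "\<forall>i<n. local_state \<sigma> i = Frame (ids i) j r"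
    and bij: "bij_betw ids {..<n} {..<n}"
    and owner: "J < n" "ids J = j"
    and quota: "r \<le> length (snd (\<sigma> J))"
    and act: "a \<in> set_pmf (action_pmf (rr_protocol n) n \<sigma>)"
begin

abbreviation "\<sigma>' \<equiv> slot_result (rr_protocol n) n gs t \<sigma> a v"
abbreviation "Q \<equiv> length (snd (\<sigma> J))"
abbreviation "j' \<equiv> fst (frame_advance n j r (if r = 0 then Q else 0))"
abbreviation "r' \<equiv> snd (frame_advance n j r (if r = 0 then Q else 0))"
abbreviation "A \<equiv> \<Sum>i<n. arrivals_at gs v i"
abbreviation "round_ends \<equiv> Suc j = n \<and> (r = 1 \<or> (r = 0 \<and> Q \<le> 1))"

lemma n_pos: "0 < n" and j_less: "j < n" and ids_less: "i < n \<Longrightarrow> ids i < n"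
  using owner bij by (auto simp: bij_betw_def)

lemma owner_iff: "i < n \<Longrightarrow> ids i = j \<longleftrightarrow> i = J"
  using bij owner unfolding bij_betw_def inj_on_def by auto

lemma local_state_next: "\<forall>i<n. local_state \<sigma>' i = Frame (ids i) j' r'"
  and queue_next: "i < n \<Longrightarrow> snd (\<sigma>' i) = (if i = J then tl (snd (\<sigma> i)) else snd (\<sigma> i))
         @ map (\<lambda>g. (t, g)) (filter (\<lambda>g. v g = Some i) [0..<length gs])"
  using frame_slot_result[OF frame bij owner act] by blast+

lemma arrivals_bound: "real A \<le> real (arrivals gs v)"
  using sum_arrivals_at_le[where n = n and gs = gs and v = v] of_nat_mono by blast

lemma backlog_next: "real (backlog n \<sigma>') = real (backlog n \<sigma>) - (if 0 < Q then 1 else 0) + real A"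
  using backlog_slot_result_eq[OF queue_next owner(1)] by simp

lemmas potential_before = potential_Frame[OF n_pos frame]
lemmas potential_after = potential_Frame[OF n_pos local_state_next]

lemma late_count_next:
  assumes "\<not> round_ends" "i < n"
  shows "(if turn_taken j' r' (ids i) then length (snd (\<sigma>' i)) - turn_quota j' r' (ids i) else 0)
      \<le> (if turn_taken j r (ids i) then length (snd (\<sigma> i)) - turn_quota j r (ids i) else 0) + arrivals_at gs v i"
proof -
  have "(if turn_taken j' r' (ids i) then length (snd (\<sigma>' i)) - turn_quota j' r' (ids i) else 0)
      \<le> (if turn_taken j r (ids i) then length (snd (\<sigma> i)) - turn_quota j r (ids i) else 0)
         + length (map (\<lambda>g. (t, g)) (filter (\<lambda>g. v g = Some i) [0..<length gs]))"
    by (rule late_count_frame_advance[OF j_less ids_less[OF assms(2)] owner_iff[OF assms(2)] _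
          queue_next[OF assms(2)], where Q = "length (snd (\<sigma> J))"])
       (use assms(1) quota in auto)
  then show ?thesis by (simp add: arrivals_at_def)
qed

lemma potential_within_round:
  assumes "\<not> round_ends"
  shows "potential n M \<sigma>' \<le> potential n M \<sigma> - 1 + 2 * real (arrivals gs v)"
proof -
  have "late_backlog n j' r' \<sigma>' \<le> late_backlog n j r \<sigma> + A"
    unfolding potential_before(3) potential_after(3) sum.distrib[symmetric]
    using late_count_next[OF assms] by (intro sum_mono) auto
  then have "real (min n (late_backlog n j' r' \<sigma>')) \<le> real (min n (late_backlog n j r \<sigma>)) + real A"
    by linarith
  moreover have "real (turns_left n j' r') - (if 0 < Q then 1 else 0) \<le> real (turns_left n j r) - 1"
    using assms quota j_less owner
    by (auto simp: turns_left_def frame_advance_def cyclic_succ_def of_nat_diff split: if_splits)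
  ultimately show ?thesis
    unfolding potential_before(1) potential_after(1) backlog_next using arrivals_bound by linarith
qed

lemma tag_potential_within_round:
  assumes "\<not> round_ends" "fst tag \<noteq> t"
  shows "tag_potential n M tag \<sigma>' \<le> tag_potential n M tag \<sigma> - 1 + real (arrivals gs v)"
proof -
  have "tag_late n j r tag \<sigma>" if late: "tag_late n j' r' tag \<sigma>'"
  proof -
    obtain i where i: "i < n" "turn_taken j' r' (ids i)" "tag \<in> set (drop (turn_quota j' r' (ids i)) (snd (\<sigma>' i)))"
      using late unfolding potential_after(4) by blast
    have new: "tag \<notin> set (map (\<lambda>g. (t, g)) (filter (\<lambda>g. v g = Some i) [0..<length gs]))"
      using assms(2) by auto
    have "turn_taken j r (ids i) \<and> tag \<in> set (drop (turn_quota j r (ids i)) (snd (\<sigma> i)))"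
      by (rule late_tag_frame_advance[OF j_less ids_less[OF i(1)] owner_iff[OF i(1)] _ queue_next[OF i(1)],
            where Q = "length (snd (\<sigma> J))"])
         (use assms(1) quota i new in auto)
    then show ?thesis unfolding potential_before(4) using i by blast
  qed
  moreover have "real (turns_left n j' r') - (if 0 < Q then 1 else 0) \<le> real (turns_left n j r) - 1"
    using assms quota j_less owner
    by (auto simp: turns_left_def frame_advance_def cyclic_succ_def of_nat_diff split: if_splits)
  ultimately show ?thesis
    unfolding potential_before(2) potential_after(2) backlog_next using arrivals_bound by auto
qed

lemma round_end_state:
  assumes "round_ends"
  shows "late_backlog n j' r' \<sigma>' = 0" "\<not> tag_late n j' r' tag \<sigma>'"
    "turns_left n j' r' = n" "turns_left n j r = (if r = 0 then 1 else 0)"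
    "r = 0 \<and> Q \<le> 1 \<or> r = 1 \<and> 1 \<le> Q"
proof -
  have "j' = 0" "r' = 0" using assms by (auto simp: frame_advance_def cyclic_succ_def)
  then show "late_backlog n j' r' \<sigma>' = 0" "\<not> tag_late n j' r' tag \<sigma>'" "turns_left n j' r' = n"
    unfolding potential_after(3,4) by (simp_all add: turn_taken_def turns_left_def)
  show "turns_left n j r = (if r = 0 then 1 else 0)" "r = 0 \<and> Q \<le> 1 \<or> r = 1 \<and> 1 \<le> Q"
    using assms quota by (auto simp: turns_left_def)
qed

lemma backlog_le_late_backlog_at_round_end:
  assumes "round_ends"
  shows "backlog n \<sigma> \<le> late_backlog n j r \<sigma> + (if r = 0 then Q else 1)"
proof -
  have "length (snd (\<sigma> i)) \<le> (if turn_taken j r (ids i) then length (snd (\<sigma> i)) - turn_quota j r (ids i) else 0)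
      + (if i = J then (if r = 0 then Q else 1) else 0)" if "i < n" for i
  proof (cases "i = J")
    case True then show ?thesis using assms owner by (auto simp: turn_taken_def turn_quota_def)
  next
    case False
    then have "ids i < j" using owner_iff[OF that] ids_less[OF that] assms by auto
    then show ?thesis using False by (simp add: turn_taken_def turn_quota_def)
  qed
  then have "backlog n \<sigma> \<le> (\<Sum>i<n. (if turn_taken j r (ids i) then length (snd (\<sigma> i)) - turn_quota j r (ids i) else 0)
      + (if i = J then (if r = 0 then Q else 1) else 0))"
    unfolding backlog_def by (intro sum_mono) auto
  also have "\<dots> = late_backlog n j r \<sigma> + (if r = 0 then Q else 1)"
    unfolding potential_before(3) sum.distrib using owner by (simp add: sum.delta)
  finally show ?thesis .
qed

lemma potential_at_round_end:
  assumes "round_ends"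
  shows "potential n M \<sigma>' \<le> max (potential n M \<sigma> - 1) (2 * real n) + real (arrivals gs v)"
proof (cases "n \<le> late_backlog n j r \<sigma>")
  case True
  then show ?thesis
    unfolding potential_before(1) potential_after(1) backlog_next
    using round_end_state[OF assms] arrivals_bound by auto
next
  case False
  then have "real (backlog n \<sigma>) \<le> real n"
    using backlog_le_late_backlog_at_round_end[OF assms] round_end_state(5)[OF assms] by auto
  then show ?thesis
    unfolding potential_after(1) backlog_next using round_end_state[OF assms] arrivals_bound by auto
qed

lemma tag_potential_at_round_end:
  assumes "round_ends" "i < n" "tag \<in> set (snd (\<sigma>' i))" "fst tag \<noteq> t"
  shows "tag_potential n M tag \<sigma>' \<le> tag_potential n M tag \<sigma> - 1 + real (arrivals gs v)"
proof -
  have old: "tag \<in> set (if i = J then tl (snd (\<sigma> i)) else snd (\<sigma> i))"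
    using assms(3,4) queue_next[OF assms(2)] by auto
  have "tag_late n j r tag \<sigma>"
  proof (cases "i = J")
    case False
    then have "ids i < j" using owner_iff[OF assms(2)] ids_less[OF assms(2)] assms(1) by auto
    then show ?thesis unfolding potential_before(4) using assms(2) old False by (auto simp: turn_taken_def turn_quota_def)
  next
    case True
    have "\<not> 2 \<le> length (snd (\<sigma> J)) \<Longrightarrow> tl (snd (\<sigma> J)) = []" by (cases "snd (\<sigma> J)") (auto simp: Suc_le_eq)
    then have "r = 1" using old True round_end_state(5)[OF assms(1)] by auto
    then show ?thesis
      unfolding potential_before(4) using assms(2) old True owner by (auto simp: turn_taken_def turn_quota_def drop_Suc)
  qed
  then show ?thesis
    unfolding potential_before(2) potential_after(2) backlog_next
    using round_end_state[OF assms(1)] arrivals_bound by auto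
qed

end

lemma frame_potential_step:
  assumes "frame_inv n \<sigma>" "a \<in> set_pmf (action_pmf (rr_protocol n) n \<sigma>)"
  shows "potential n M (slot_result (rr_protocol n) n gs t \<sigma> a v)
           \<le> max (potential n M \<sigma> - 1) (2 * real n) + 2 * real (arrivals gs v)"
    and "\<exists>i<n. tag \<in> set (snd (slot_result (rr_protocol n) n gs t \<sigma> a v i)) \<Longrightarrow> fst tag \<noteq> t \<Longrightarrow>
         tag_potential n M tag (slot_result (rr_protocol n) n gs t \<sigma> a v)
           \<le> tag_potential n M tag \<sigma> - 1 + real (arrivals gs v)"
proof -
  obtain j r ids where j: "j < n" and frame: "\<forall>i<n. local_state \<sigma> i = Frame (ids i) j r"
    and bij: "bij_betw ids {..<n} {..<n}" and quota: "\<forall>i<n. ids i = j \<longrightarrow> r \<le> length (snd (\<sigma> i))"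
    using assms(1) unfolding frame_inv_def by blast
  obtain J where owner: "J < n" "ids J = j"
    using bij j unfolding bij_betw_def by (metis imageE lessThan_iff)
  interpret frame_slot n gs t \<sigma> a v ids j r J
    using frame bij owner quota assms(2) by unfold_locales auto
  have "potential n M \<sigma> - 1 \<le> max (potential n M \<sigma> - 1) (2 * real n)" "0 \<le> real (arrivals gs v)"
    by simp_all
  then show "potential n M \<sigma>' \<le> max (potential n M \<sigma> - 1) (2 * real n) + 2 * real (arrivals gs v)"
    using potential_within_round[of M] potential_at_round_end[of M] by (cases round_ends) linarith+
  show "tag_potential n M tag \<sigma>' \<le> tag_potential n M tag \<sigma> - 1 + real (arrivals gs v)"
    if "\<exists>i<n. tag \<in> set (snd (\<sigma>' i))" "fst tag \<noteq> t"
    using that tag_potential_within_round tag_potential_at_round_end by blast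
qed

lemma tag_potential_setup: "0 < n \<Longrightarrow> setup_inv n \<sigma> \<Longrightarrow> tag_potential n M tag \<sigma> = potential n M \<sigma>"
  by (auto simp: setup_inv_def potential_def tag_potential_def)

lemma setup_potential_step:
  assumes "0 < n" "setup_inv n \<sigma>" and a: "a \<in> set_pmf (action_pmf (rr_protocol n) n \<sigma>)"
  shows "potential n M (slot_result (rr_protocol n) n gs t \<sigma> a v) \<le> potential n M \<sigma> + real (arrivals gs v)
            - M * (if card {i. i < n \<and> a i \<noteq> None} = 1 then 1 else 0)"
    and "tag_potential n M tag (slot_result (rr_protocol n) n gs t \<sigma> a v)
           = potential n M (slot_result (rr_protocol n) n gs t \<sigma> a v)"
proof -
  let ?\<sigma>' = "slot_result (rr_protocol n) n gs t \<sigma> a v"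
  obtain k me where k: "k < n" and in_setup: "\<forall>i<n. local_state \<sigma> i = Setup k (me i)"
    using assms(2) unfolding setup_inv_def by blast
  have backlog: "real (backlog n ?\<sigma>') \<le> real (backlog n \<sigma>) + real (arrivals gs v)"
    by (rule backlog_slot_result_le)
  have before: "potential n M \<sigma> = real (backlog n \<sigma>) + M * real (n - k) + real n + 1"
    using in_setup assms(1) by (simp add: potential_def)
  have "potential n M ?\<sigma>' \<le> potential n M \<sigma> + real (arrivals gs v)
          - M * (if card {i. i < n \<and> a i \<noteq> None} = 1 then 1 else 0)
        \<and> tag_potential n M tag ?\<sigma>' = potential n M ?\<sigma>'"
  proof (cases "card {i. i < n \<and> a i \<noteq> None} = 1")
    case False
    then have "local_state ?\<sigma>' 0 = Setup k (me 0)" using setup_slot_failure[OF in_setup False assms(1)] by simp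
    then show ?thesis using before backlog False by (simp add: potential_def tag_potential_def)
  next
    case True
    then obtain i0 where success: "{i. i < n \<and> a i \<noteq> None} = {i0}" by (meson card_1_singletonE)
    have after: "local_state ?\<sigma>' 0 = (if Suc k = n then Frame ((me(i0 := Suc k)) 0 - 1) 0 0
        else Setup (Suc k) ((me(i0 := Suc k)) 0))"
      using setup_slot_success(2)[OF in_setup a success assms(1)] .
    show ?thesis
    proof (cases "Suc k = n")
      case False
      then have "real (n - Suc k) = real (n - k) - 1" using k by (simp add: of_nat_diff)
      then show ?thesis using after False before backlog True
        by (simp add: potential_def tag_potential_def algebra_simps)
    next
      case True
      have "late_backlog n 0 0 ?\<sigma>' = 0" "\<not> tag_late n 0 0 tag ?\<sigma>'" "n - k = 1"
        using True by (simp_all add: late_backlog_def tag_late_def turn_taken_def)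
      then show ?thesis using after True before backlog \<open>card _ = 1\<close>
        by (simp add: potential_def tag_potential_def turns_left_def)
    qed
  qed
  then show "potential n M ?\<sigma>' \<le> potential n M \<sigma> + real (arrivals gs v)
          - M * (if card {i. i < n \<and> a i \<noteq> None} = 1 then 1 else 0)"
    and "tag_potential n M tag ?\<sigma>' = potential n M ?\<sigma>'" by simp_all
qed

lemma setup_success_probability:
  assumes "setup_inv n \<sigma>"
  obtains a0 where "card {i. i < n \<and> a0 i \<noteq> None} = 1" "(1/2) ^ n \<le> pmf (action_pmf (rr_protocol n) n \<sigma>) a0"
proof -
  obtain k me where k: "k < n" and in_setup: "\<forall>i<n. local_state \<sigma> i = Setup k (me i)"
    and card: "card {i. i < n \<and> me i \<noteq> 0} = k"
    using assms unfolding setup_inv_def by blast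
  have "{i. i < n \<and> me i \<noteq> 0} \<noteq> {..<n}"
  proof
    assume "{i. i < n \<and> me i \<noteq> 0} = {..<n}"
    then show False using card k by simp
  qed
  then obtain u where u: "u < n" "me u = 0" by blast
  define a0 where "a0 = (\<lambda>i. if i = u then Some (0::nat) else None)"
  have "{i. i < n \<and> a0 i \<noteq> None} = {u}" using u by (auto simp: a0_def)
  then have "card {i. i < n \<and> a0 i \<noteq> None} = 1" by simp
  moreover have "(1/2) ^ n \<le> pmf (action_pmf (rr_protocol n) n \<sigma>) a0"
  proof -
    have "pmf (action_pmf (rr_protocol n) n \<sigma>) a0 = (if (\<forall>x. x \<notin> {..<n} \<longrightarrow> a0 x = None)
        then \<Prod>i\<in>{..<n}. pmf (mp_act (rr_protocol n) (fst (\<sigma> i)) (length (snd (\<sigma> i)))) (a0 i) else 0)"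
      by (rule pmf_Pi) simp
    also have "\<dots> = (\<Prod>i<n. pmf (mp_act (rr_protocol n) (fst (\<sigma> i)) (length (snd (\<sigma> i)))) (a0 i))"
      using u by (simp add: a0_def)
    also have "(\<Prod>i<n. pmf (mp_act (rr_protocol n) (fst (\<sigma> i)) (length (snd (\<sigma> i)))) (a0 i))
        \<ge> (\<Prod>i<n. 1/2)"
    proof (rule prod_mono, rule conjI)
      fix i assume "i \<in> {..<n}"
      then have "mp_act (rr_protocol n) (fst (\<sigma> i)) (length (snd (\<sigma> i))) = (if me i = 0 then fair_coin else return_pmf None)"
        using in_setup by (simp add: rr_protocol_def local_state_def)
      then show "1/2 \<le> pmf (mp_act (rr_protocol n) (fst (\<sigma> i)) (length (snd (\<sigma> i)))) (a0 i)"
        using u pmf_fair_coin by (cases "i = u"; cases "me i = 0") (simp_all add: a0_def)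
    qed simp
    finally show ?thesis by simp
  qed
  ultimately show ?thesis using that by blast
qed

lemma setup_success_expectation:
  assumes "setup_inv n \<sigma>" "0 \<le> c" "c \<le> 1"
  shows "(\<integral>\<^sup>+a. ennreal (if card {i. i < n \<and> a i \<noteq> None} = 1 then c else 1) \<partial>action_pmf (rr_protocol n) n \<sigma>)
         \<le> ennreal (1 - (1/2)^n * (1 - c))"
proof -
  let ?p = "action_pmf (rr_protocol n) n \<sigma>"
  obtain a0 where a0: "card {i. i < n \<and> a0 i \<noteq> None} = 1" "(1/2) ^ n \<le> pmf ?p a0"
    using setup_success_probability[OF assms(1)] by blast
  have "(\<integral>\<^sup>+a. ennreal (if card {i. i < n \<and> a i \<noteq> None} = 1 then c else 1) \<partial>?p)
     \<le> (\<integral>\<^sup>+a. ennreal (if a \<in> {a0} then c else 1) \<partial>?p)"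
    using a0 assms by (intro nn_integral_mono ennreal_leI) auto
  also have "\<dots> = ennreal (c * pmf ?p a0 + 1 * (1 - pmf ?p a0))"
    using nn_integral_pmf_two_valued[of c 1 ?p "{a0}"] assms by (simp add: measure_pmf_single)
  also have "\<dots> \<le> ennreal (1 - (1/2)^n * (1 - c))"
  proof (rule ennreal_leI)
    have "(1/2)^n * (1 - c) \<le> pmf ?p a0 * (1 - c)" using a0(2) assms by (intro mult_right_mono) auto
    then show "c * pmf ?p a0 + 1 * (1 - pmf ?p a0) \<le> 1 - (1/2)^n * (1 - c)"
      by (simp add: algebra_simps)
  qed
  finally show ?thesis .
qed

section \<open>Exponential drift\<close>

definition in_system :: "nat \<Rightarrow> pkt \<Rightarrow> gstate \<Rightarrow> bool" where
  "in_system n tag \<sigma> \<longleftrightarrow> (\<exists>i<n. tag \<in> set (snd (\<sigma> i)))"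

lemma in_system_slot_result:
  assumes "in_system n tag (slot_result P n gs t \<sigma> a v)"
  shows "in_system n tag \<sigma> \<or> (fst tag = t \<and> v (snd tag) \<noteq> None)"
  using assms set_queue_slot_result[of _ n P gs t \<sigma> a v] unfolding in_system_def by fastforce

(* K bounds the exponential moment of 2 theta times the number of injections, since a packet adds at
   most 2 to the potential; the two contraction hypotheses account for the decrease of the potential
   by 1 in a round-robin slot and by M = 1/theta in a setup slot that succeeds with probability at
   least 2^-n. *)
locale drift_setting =
  fixes n :: nat and gs :: "nat option pmf list" and \<theta> \<rho> M K :: real
  assumes n_pos: "0 < n" and theta_pos: "0 < \<theta>" and M_eq: "M = 1 / \<theta>"
    and K_eq: "K = exp (inj_rate gs * (exp (2 * \<theta>) - 1))"
    and frame_contraction: "exp (- \<theta>) * K \<le> \<rho>"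
    and setup_contraction: "(1 - (1/2)^n * (1 - exp (- 1))) * K \<le> \<rho>"
    and rho_less_1: "\<rho> < 1"
begin

abbreviation "actions \<sigma> \<equiv> action_pmf (rr_protocol n) n \<sigma>"
abbreviation "next_state t \<sigma> a v \<equiv> slot_result (rr_protocol n) n gs t \<sigma> a v"

lemma M_nonneg: "0 \<le> M" and K_nonneg: "0 \<le> K" and rho_nonneg: "0 \<le> \<rho>"
proof -
  show "0 \<le> M" "0 \<le> K" using theta_pos by (simp_all add: M_eq K_eq)
  have "0 \<le> exp (- \<theta>) * K" by (simp add: K_eq)
  then show "0 \<le> \<rho>" using frame_contraction by linarith
qed

lemma nested_integral_le_K:
  assumes "\<And>a v. a \<in> set_pmf p \<Longrightarrow> h a v \<le> f a * exp (2 * \<theta> * real (arrivals gs v))"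
    and "\<And>a. 0 \<le> f a"
  shows "(\<integral>\<^sup>+a. \<integral>\<^sup>+v. ennreal (h a v) \<partial>injection_pmf gs \<partial>p) \<le> (\<integral>\<^sup>+a. ennreal (f a) \<partial>p) * ennreal K"
proof -
  have "(\<integral>\<^sup>+a. \<integral>\<^sup>+v. ennreal (h a v) \<partial>injection_pmf gs \<partial>p)
      \<le> (\<integral>\<^sup>+a. ennreal (f a) \<partial>p) * (\<integral>\<^sup>+v. ennreal (exp (2 * \<theta> * real (arrivals gs v))) \<partial>injection_pmf gs)"
    using assms by (intro nn_integral_pmf_nested_le_mult) (simp add: ennreal_mult[symmetric] ennreal_leI)
  also have "\<dots> \<le> (\<integral>\<^sup>+a. ennreal (f a) \<partial>p) * ennreal K"
    using exp_moment_arrivals[of "2 * \<theta>" gs] theta_pos by (intro mult_left_mono) (simp_all add: K_eq)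
  finally show ?thesis .
qed

lemma exp_potential_setup_step:
  assumes "setup_inv n \<sigma>" "a \<in> set_pmf (actions \<sigma>)"
  shows "exp (\<theta> * potential n M (next_state t \<sigma> a v)) \<le>
     exp (\<theta> * potential n M \<sigma>) * (if card {i. i < n \<and> a i \<noteq> None} = 1 then exp (- 1) else 1)
       * exp (2 * \<theta> * real (arrivals gs v))"
proof -
  let ?success = "card {i. i < n \<and> a i \<noteq> None} = 1"
  have "\<theta> * potential n M (next_state t \<sigma> a v)
      \<le> \<theta> * (potential n M \<sigma> + real (arrivals gs v) - M * (if ?success then 1 else 0))"
    using setup_potential_step(1)[OF n_pos assms] theta_pos by (intro mult_left_mono) simp_all
  also have "\<dots> \<le> \<theta> * potential n M \<sigma> + (if ?success then - 1 else 0) + 2 * \<theta> * real (arrivals gs v)"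
    using theta_pos by (simp add: M_eq algebra_simps)
  finally have "exp (\<theta> * potential n M (next_state t \<sigma> a v))
      \<le> exp (\<theta> * potential n M \<sigma> + (if ?success then - 1 else 0) + 2 * \<theta> * real (arrivals gs v))"
    by simp
  also have "\<dots> = exp (\<theta> * potential n M \<sigma>) * (if ?success then exp (- 1) else 1) * exp (2 * \<theta> * real (arrivals gs v))"
    by (simp add: exp_add)
  finally show ?thesis .
qed

lemma setup_drift:
  assumes "setup_inv n \<sigma>"
  shows "(\<integral>\<^sup>+a. \<integral>\<^sup>+v. ennreal (exp (\<theta> * potential n M (next_state t \<sigma> a v))) \<partial>injection_pmf gs \<partial>actions \<sigma>)
           \<le> ennreal (\<rho> * exp (\<theta> * potential n M \<sigma>))"
proof -
  let ?X = "exp (\<theta> * potential n M \<sigma>)"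
  let ?c = "1 - (1/2::real)^n * (1 - exp (- 1))"
  have c: "0 \<le> ?c"
  proof -
    have "(1/2::real)^n * (1 - exp (- 1)) \<le> 1 * 1" by (intro mult_mono) (simp_all add: power_le_one)
    then show ?thesis by simp
  qed
  have "(\<integral>\<^sup>+a. \<integral>\<^sup>+v. ennreal (exp (\<theta> * potential n M (next_state t \<sigma> a v))) \<partial>injection_pmf gs \<partial>actions \<sigma>)
      \<le> (\<integral>\<^sup>+a. ennreal (?X * (if card {i. i < n \<and> a i \<noteq> None} = 1 then exp (- 1) else 1)) \<partial>actions \<sigma>) * ennreal K"
    using exp_potential_setup_step[OF assms] by (intro nested_integral_le_K) simp_all
  also have "\<dots> \<le> ennreal ?X * ennreal ?c * ennreal K"
  proof (rule mult_right_mono)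
    have "(\<integral>\<^sup>+a. ennreal (?X * (if card {i. i < n \<and> a i \<noteq> None} = 1 then exp (- 1) else 1)) \<partial>actions \<sigma>)
      = ennreal ?X * (\<integral>\<^sup>+a. ennreal (if card {i. i < n \<and> a i \<noteq> None} = 1 then exp (- 1) else 1) \<partial>actions \<sigma>)"
      by (simp add: ennreal_mult nn_integral_cmult)
    also have "\<dots> \<le> ennreal ?X * ennreal ?c"
      using setup_success_expectation[OF assms, of "exp (- 1)"] by (intro mult_left_mono) simp_all
    finally show "(\<integral>\<^sup>+a. ennreal (?X * (if card {i. i < n \<and> a i \<noteq> None} = 1 then exp (- 1) else 1)) \<partial>actions \<sigma>)
      \<le> ennreal ?X * ennreal ?c" .
  qed simp
  also have "\<dots> = ennreal (?X * (?c * K))"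
    using c K_nonneg by (simp add: ennreal_mult mult.assoc)
  also have "\<dots> \<le> ennreal (\<rho> * ?X)"
    using setup_contraction by (intro ennreal_leI) (simp add: mult.commute mult_left_mono)
  finally show ?thesis .
qed

lemma frame_drift:
  assumes "frame_inv n \<sigma>"
  shows "(\<integral>\<^sup>+a. \<integral>\<^sup>+v. ennreal (exp (\<theta> * potential n M (next_state t \<sigma> a v))) \<partial>injection_pmf gs \<partial>actions \<sigma>)
           \<le> ennreal (\<rho> * exp (\<theta> * potential n M \<sigma>) + exp (2 * real n * \<theta>) * K)"
proof -
  let ?C = "exp (\<theta> * (potential n M \<sigma> - 1)) + exp (\<theta> * (2 * real n))"
  have "exp (\<theta> * potential n M (next_state t \<sigma> a v)) \<le> ?C * exp (2 * \<theta> * real (arrivals gs v))"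
    if "a \<in> set_pmf (actions \<sigma>)" for a v
  proof -
    have "exp (\<theta> * potential n M (next_state t \<sigma> a v))
        \<le> exp (\<theta> * (max (potential n M \<sigma> - 1) (2 * real n) + 2 * real (arrivals gs v)))"
      using frame_potential_step(1)[OF assms that] theta_pos by (simp add: mult_left_mono)
    also have "\<dots> = exp (\<theta> * max (potential n M \<sigma> - 1) (2 * real n)) * exp (2 * \<theta> * real (arrivals gs v))"
      by (simp add: distrib_left exp_add)
    also have "\<dots> \<le> ?C * exp (2 * \<theta> * real (arrivals gs v))"
      using exp_mult_max_le[of \<theta>] theta_pos by (intro mult_right_mono) simp_all
    finally show ?thesis .
  qed
  then have "(\<integral>\<^sup>+a. \<integral>\<^sup>+v. ennreal (exp (\<theta> * potential n M (next_state t \<sigma> a v))) \<partial>injection_pmf gs \<partial>actions \<sigma>)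
      \<le> (\<integral>\<^sup>+a. ennreal ?C \<partial>actions \<sigma>) * ennreal K"
    by (intro nested_integral_le_K) simp_all
  also have "\<dots> = ennreal (?C * K)"
    using K_nonneg by (simp add: nn_integral_const_pmf ennreal_mult)
  also have "?C * K = exp (\<theta> * potential n M \<sigma>) * (exp (- \<theta>) * K) + exp (2 * real n * \<theta>) * K"
    by (simp add: algebra_simps exp_diff exp_minus field_simps)
  also have "\<dots> \<le> \<rho> * exp (\<theta> * potential n M \<sigma>) + exp (2 * real n * \<theta>) * K"
    using frame_contraction by (simp add: mult.commute)
  finally show ?thesis by (simp add: ennreal_leI)
qed

lemma potential_drift:
  assumes "protocol_inv n t \<sigma>"
  shows "(\<integral>\<^sup>+\<sigma>'. ennreal (exp (\<theta> * potential n M \<sigma>')) \<partial>mac_step (rr_protocol n) n gs t \<sigma>)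
          \<le> ennreal \<rho> * ennreal (exp (\<theta> * potential n M \<sigma>)) + ennreal (exp (2 * real n * \<theta>) * K)"
proof -
  have "setup_inv n \<sigma> \<or> frame_inv n \<sigma>" using assms by (simp add: protocol_inv_def)
  then have "(\<integral>\<^sup>+a. \<integral>\<^sup>+v. ennreal (exp (\<theta> * potential n M (next_state t \<sigma> a v))) \<partial>injection_pmf gs \<partial>actions \<sigma>)
          \<le> ennreal (\<rho> * exp (\<theta> * potential n M \<sigma>) + exp (2 * real n * \<theta>) * K)"
  proof
    assume "setup_inv n \<sigma>"
    then have "(\<integral>\<^sup>+a. \<integral>\<^sup>+v. ennreal (exp (\<theta> * potential n M (next_state t \<sigma> a v))) \<partial>injection_pmf gs \<partial>actions \<sigma>)
        \<le> ennreal (\<rho> * exp (\<theta> * potential n M \<sigma>))"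
      by (rule setup_drift)
    also have "\<dots> \<le> ennreal (\<rho> * exp (\<theta> * potential n M \<sigma>) + exp (2 * real n * \<theta>) * K)"
      using K_nonneg by (intro ennreal_leI) simp
    finally show ?thesis .
  qed (rule frame_drift)
  then show ?thesis
    using rho_nonneg K_nonneg by (simp add: nn_integral_mac_step ennreal_mult ennreal_plus)
qed

abbreviation "tag_weight tag \<sigma> \<equiv> if in_system n tag \<sigma> then exp (\<theta> * tag_potential n M tag \<sigma>) else 0"

lemma tag_drift_setup:
  assumes "setup_inv n \<sigma>"
  shows "(\<integral>\<^sup>+a. \<integral>\<^sup>+v. ennreal (tag_weight tag (next_state t \<sigma> a v)) \<partial>injection_pmf gs \<partial>actions \<sigma>)
           \<le> ennreal (\<rho> * exp (\<theta> * tag_potential n M tag \<sigma>))"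
proof -
  have "(\<integral>\<^sup>+a. \<integral>\<^sup>+v. ennreal (tag_weight tag (next_state t \<sigma> a v)) \<partial>injection_pmf gs \<partial>actions \<sigma>)
      \<le> (\<integral>\<^sup>+a. \<integral>\<^sup>+v. ennreal (exp (\<theta> * potential n M (next_state t \<sigma> a v))) \<partial>injection_pmf gs \<partial>actions \<sigma>)"
    using setup_potential_step(2)[OF n_pos assms] by (intro nn_integral_pmf_nested_mono ennreal_leI) simp
  also have "\<dots> \<le> ennreal (\<rho> * exp (\<theta> * potential n M \<sigma>))"
    by (rule setup_drift[OF assms])
  finally show ?thesis using tag_potential_setup[OF n_pos assms] by simp
qed

lemma tag_drift_frame:
  assumes "frame_inv n \<sigma>" "fst tag \<noteq> t"
  shows "(\<integral>\<^sup>+a. \<integral>\<^sup>+v. ennreal (tag_weight tag (next_state t \<sigma> a v)) \<partial>injection_pmf gs \<partial>actions \<sigma>)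
           \<le> ennreal (\<rho> * exp (\<theta> * tag_potential n M tag \<sigma>))"
proof -
  have "tag_weight tag (next_state t \<sigma> a v)
      \<le> exp (\<theta> * (tag_potential n M tag \<sigma> - 1)) * exp (2 * \<theta> * real (arrivals gs v))"
    if "a \<in> set_pmf (actions \<sigma>)" for a v
  proof (cases "in_system n tag (next_state t \<sigma> a v)")
    case True
    then have "tag_potential n M tag (next_state t \<sigma> a v) \<le> tag_potential n M tag \<sigma> - 1 + real (arrivals gs v)"
      using frame_potential_step(2)[OF assms(1) that] assms(2) by (simp add: in_system_def)
    then have "\<theta> * tag_potential n M tag (next_state t \<sigma> a v)
        \<le> \<theta> * (tag_potential n M tag \<sigma> - 1 + real (arrivals gs v))"
      using theta_pos by (intro mult_left_mono) simp_all
    also have "\<dots> \<le> \<theta> * (tag_potential n M tag \<sigma> - 1) + 2 * \<theta> * real (arrivals gs v)"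
      using theta_pos by (simp add: algebra_simps)
    finally have "\<theta> * tag_potential n M tag (next_state t \<sigma> a v)
        \<le> \<theta> * (tag_potential n M tag \<sigma> - 1) + 2 * \<theta> * real (arrivals gs v)" .
    then show ?thesis using True by (simp add: exp_add[symmetric])
  qed simp
  then have "(\<integral>\<^sup>+a. \<integral>\<^sup>+v. ennreal (tag_weight tag (next_state t \<sigma> a v)) \<partial>injection_pmf gs \<partial>actions \<sigma>)
      \<le> (\<integral>\<^sup>+a. ennreal (exp (\<theta> * (tag_potential n M tag \<sigma> - 1))) \<partial>actions \<sigma>) * ennreal K"
    by (intro nested_integral_le_K) simp_all
  also have "\<dots> = ennreal (exp (\<theta> * tag_potential n M tag \<sigma>) * (exp (- \<theta>) * K))"
    using K_nonneg by (simp add: nn_integral_const_pmf ennreal_mult[symmetric] exp_diff exp_minus field_simps)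
  also have "\<dots> \<le> ennreal (\<rho> * exp (\<theta> * tag_potential n M tag \<sigma>))"
    using frame_contraction by (intro ennreal_leI) (simp add: mult.commute)
  finally show ?thesis .
qed

lemma tag_drift:
  assumes "protocol_inv n t \<sigma>" "fst tag \<noteq> t"
  shows "(\<integral>\<^sup>+\<sigma>'. ennreal (tag_weight tag \<sigma>') \<partial>mac_step (rr_protocol n) n gs t \<sigma>)
          \<le> ennreal \<rho> * ennreal (tag_weight tag \<sigma>)"
proof (cases "in_system n tag \<sigma>")
  case False
  then have "\<not> in_system n tag (next_state t \<sigma> a v)" for a v
    using in_system_slot_result assms(2) by blast
  then show ?thesis by (simp add: nn_integral_mac_step)
next
  case True
  have "setup_inv n \<sigma> \<or> frame_inv n \<sigma>" using assms(1) by (simp add: protocol_inv_def)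
  then have "(\<integral>\<^sup>+a. \<integral>\<^sup>+v. ennreal (tag_weight tag (next_state t \<sigma> a v)) \<partial>injection_pmf gs \<partial>actions \<sigma>)
           \<le> ennreal (\<rho> * exp (\<theta> * tag_potential n M tag \<sigma>))"
    using tag_drift_setup tag_drift_frame assms(2) by blast
  then show ?thesis using True rho_nonneg by (simp add: nn_integral_mac_step ennreal_mult)
qed

lemma tag_potential_after_injection:
  assumes "protocol_inv n s \<sigma>" "a \<in> set_pmf (actions \<sigma>)" "in_system n (s, g) (next_state s \<sigma> a v)"
  shows "v g \<noteq> None"
    and "tag_potential n M (s, g) (next_state s \<sigma> a v) \<le> potential n M \<sigma> + 3 * real n + 2 * real (arrivals gs v)"
proof -
  have "\<not> in_system n (s, g) \<sigma>" using assms(1) unfolding protocol_inv_def in_system_def by fastforce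
  then show "v g \<noteq> None" using in_system_slot_result[OF assms(3)] by simp
  have "setup_inv n \<sigma> \<or> frame_inv n \<sigma>" using assms(1) by (simp add: protocol_inv_def)
  then have "potential n M (next_state s \<sigma> a v) \<le> potential n M \<sigma> + 2 * real n + 2 * real (arrivals gs v)"
  proof
    assume "setup_inv n \<sigma>"
    then have "potential n M (next_state s \<sigma> a v) \<le> potential n M \<sigma> + real (arrivals gs v)
        - M * (if card {i. i < n \<and> a i \<noteq> None} = 1 then 1 else 0)"
      by (rule setup_potential_step(1)[OF n_pos _ assms(2)])
    then show ?thesis using M_nonneg by (simp split: if_splits)
  next
    assume "frame_inv n \<sigma>"
    then show ?thesis using frame_potential_step(1)[OF _ assms(2)] potential_nonneg[OF M_nonneg, of n \<sigma>]
      by (smt (verit, ccfv_threshold) of_nat_0_le_iff)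
  qed
  then show "tag_potential n M (s, g) (next_state s \<sigma> a v) \<le> potential n M \<sigma> + 3 * real n + 2 * real (arrivals gs v)"
    using tag_potential_le_potential[OF M_nonneg, of n "(s, g)" "next_state s \<sigma> a v"] by linarith
qed

lemma tag_injection:
  assumes "protocol_inv n s \<sigma>" "g < length gs"
  shows "(\<integral>\<^sup>+\<sigma>'. ennreal (tag_weight (s, g) \<sigma>') \<partial>mac_step (rr_protocol n) n gs s \<sigma>)
          \<le> ennreal (exp (\<theta> * 3 * real n) * (measure_pmf.prob (gs ! g) {x. x \<noteq> None} * exp (2 * \<theta>) * K))
             * ennreal (exp (\<theta> * potential n M \<sigma>))"
proof -
  let ?X = "exp (\<theta> * (potential n M \<sigma> + 3 * real n))"
  have "ennreal (tag_weight (s, g) (next_state s \<sigma> a v))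
      \<le> ennreal ?X * (indicator {v. v g \<noteq> None} v * ennreal (exp (2 * \<theta> * real (arrivals gs v))))"
    if "a \<in> set_pmf (actions \<sigma>)" for a v
  proof (cases "in_system n (s, g) (next_state s \<sigma> a v)")
    case True
    note inj = tag_potential_after_injection[OF assms(1) that True]
    have "exp (\<theta> * tag_potential n M (s, g) (next_state s \<sigma> a v)) \<le> ?X * exp (2 * \<theta> * real (arrivals gs v))"
      using mult_left_mono[OF inj(2), of \<theta>] theta_pos by (simp add: algebra_simps exp_add[symmetric])
    then show ?thesis using True inj(1) by (simp add: ennreal_mult[symmetric] ennreal_leI)
  qed simp
  then have "(\<integral>\<^sup>+a. \<integral>\<^sup>+v. ennreal (tag_weight (s, g) (next_state s \<sigma> a v)) \<partial>injection_pmf gs \<partial>actions \<sigma>)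
      \<le> (\<integral>\<^sup>+a. ennreal ?X \<partial>actions \<sigma>)
         * (\<integral>\<^sup>+v. indicator {v. v g \<noteq> None} v * ennreal (exp (2 * \<theta> * real (arrivals gs v))) \<partial>injection_pmf gs)"
    by (intro nn_integral_pmf_nested_le_mult)
  also have "\<dots> \<le> ennreal ?X * ennreal (measure_pmf.prob (gs ! g) {x. x \<noteq> None} * exp (2 * \<theta>) * K)"
    unfolding nn_integral_const_pmf
    using exp_moment_arrivals_injected[of "2 * \<theta>" g gs] assms(2) theta_pos by (intro mult_left_mono) (simp_all add: K_eq)
  also have "\<dots> = ennreal (exp (\<theta> * 3 * real n) * (measure_pmf.prob (gs ! g) {x. x \<noteq> None} * exp (2 * \<theta>) * K))
             * ennreal (exp (\<theta> * potential n M \<sigma>))"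
    using K_nonneg by (simp add: ennreal_mult[symmetric] algebra_simps exp_add[symmetric])
  finally show ?thesis by (simp add: nn_integral_mac_step)
qed

definition potential_bound :: real where
  "potential_bound = max (exp (\<theta> * (M * real n + real n + 1))) (exp (2 * real n * \<theta>) * K / (1 - \<rho>))"

lemma potential_bound_nonneg: "0 \<le> potential_bound"
  unfolding potential_bound_def by (rule order_trans[OF _ max.cobounded1]) simp

lemma potential_moment_bound:
  "(\<integral>\<^sup>+\<sigma>. ennreal (exp (\<theta> * potential n M \<sigma>)) \<partial>mac_run (rr_protocol n) n gs t) \<le> ennreal potential_bound"
proof (induction t)
  case 0
  have "potential n M (\<lambda>i. (to_nat (Setup 0 0), [])) = M * real n + real n + 1"
    by (simp add: potential_def local_state_def backlog_def)
  then show ?case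
    by (simp add: rr_protocol_def potential_bound_def ennreal_leI)
next
  case (Suc t)
  let ?b = "exp (2 * real n * \<theta>) * K"
  have "(\<integral>\<^sup>+\<sigma>. ennreal (exp (\<theta> * potential n M \<sigma>)) \<partial>mac_run (rr_protocol n) n gs (Suc t))
      \<le> ennreal \<rho> * (\<integral>\<^sup>+\<sigma>. ennreal (exp (\<theta> * potential n M \<sigma>)) \<partial>mac_run (rr_protocol n) n gs t) + ennreal ?b"
    unfolding mac_run.simps
    by (intro nn_integral_bind_pmf_le_affine potential_drift protocol_inv_mac_run[OF n_pos])
  also have "\<dots> \<le> ennreal \<rho> * ennreal potential_bound + ennreal ?b"
    using Suc.IH by (intro add_mono mult_left_mono) simp_all
  also have "\<dots> = ennreal (\<rho> * potential_bound + ?b)"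
    using rho_nonneg potential_bound_nonneg K_nonneg by (simp add: ennreal_mult ennreal_plus)
  also have "\<dots> \<le> ennreal potential_bound"
  proof (rule ennreal_leI)
    have "?b / (1 - \<rho>) \<le> potential_bound" by (simp add: potential_bound_def)
    then show "\<rho> * potential_bound + ?b \<le> potential_bound"
      using rho_less_1 by (simp add: divide_le_eq algebra_simps)
  qed
  finally show ?case .
qed

lemma expected_queue_bound:
  assumes "i < n"
  shows "(\<integral>\<^sup>+\<sigma>. ennreal (real (length (snd (\<sigma> i)))) \<partial>mac_run (rr_protocol n) n gs t)
           \<le> ennreal (potential_bound / \<theta>)"
proof -
  have "ennreal (real (length (snd (\<sigma> i)))) \<le> ennreal (1 / \<theta>) * ennreal (exp (\<theta> * potential n M \<sigma>))" for \<sigma>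
  proof -
    have "length (snd (\<sigma> i)) \<le> backlog n \<sigma>" unfolding backlog_def using assms by (intro member_le_sum) auto
    then have "real (length (snd (\<sigma> i))) \<le> potential n M \<sigma>"
      using backlog_le_potential[OF M_nonneg, of n \<sigma>] by linarith
    also have "\<dots> \<le> 1 / \<theta> * exp (\<theta> * potential n M \<sigma>)"
    proof -
      have "\<theta> * potential n M \<sigma> \<le> exp (\<theta> * potential n M \<sigma>)"
        using exp_ge_add_one_self[of "\<theta> * potential n M \<sigma>"] by linarith
      then show ?thesis using theta_pos by (simp add: field_simps)
    qed
    finally show ?thesis using theta_pos by (simp add: ennreal_mult[symmetric] ennreal_leI)
  qed
  then have "(\<integral>\<^sup>+\<sigma>. ennreal (real (length (snd (\<sigma> i)))) \<partial>mac_run (rr_protocol n) n gs t)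
      \<le> ennreal (1 / \<theta>) * (\<integral>\<^sup>+\<sigma>. ennreal (exp (\<theta> * potential n M \<sigma>)) \<partial>mac_run (rr_protocol n) n gs t)"
    by (simp add: nn_integral_mono nn_integral_cmult[symmetric])
  also have "\<dots> \<le> ennreal (1 / \<theta>) * ennreal potential_bound"
    using potential_moment_bound by (intro mult_left_mono) simp_all
  also have "\<dots> = ennreal (potential_bound / \<theta>)"
    using theta_pos potential_bound_nonneg by (simp add: ennreal_mult[symmetric])
  finally show ?thesis .
qed

definition latency_const :: real where
  "latency_const = exp (\<theta> * 3 * real n) * exp (2 * \<theta>) * K * potential_bound"

lemma tag_weight_bound:
  assumes "g < length gs"
  shows "(\<integral>\<^sup>+\<sigma>. ennreal (tag_weight (s, g) \<sigma>) \<partial>mac_run (rr_protocol n) n gs (Suc s + k))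
     \<le> ennreal (\<rho> ^ k * (latency_const * measure_pmf.prob (gs ! g) {x. x \<noteq> None}))"
proof (induction k)
  case 0
  let ?c = "exp (\<theta> * 3 * real n) * (measure_pmf.prob (gs ! g) {x. x \<noteq> None} * exp (2 * \<theta>) * K)"
  have "(\<integral>\<^sup>+\<sigma>. ennreal (tag_weight (s, g) \<sigma>) \<partial>mac_run (rr_protocol n) n gs (Suc s))
      \<le> ennreal ?c * (\<integral>\<^sup>+\<sigma>. ennreal (exp (\<theta> * potential n M \<sigma>)) \<partial>mac_run (rr_protocol n) n gs s) + 0"
    unfolding mac_run.simps
  proof (rule nn_integral_bind_pmf_le_affine)
    fix \<sigma> assume "\<sigma> \<in> set_pmf (mac_run (rr_protocol n) n gs s)"
    then show "(\<integral>\<^sup>+\<sigma>'. ennreal (tag_weight (s, g) \<sigma>') \<partial>mac_step (rr_protocol n) n gs s \<sigma>)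
        \<le> ennreal ?c * ennreal (exp (\<theta> * potential n M \<sigma>)) + 0"
      using tag_injection[OF protocol_inv_mac_run[OF n_pos] assms] by simp
  qed
  also have "\<dots> \<le> ennreal ?c * ennreal potential_bound"
    using potential_moment_bound by (simp add: mult_left_mono)
  also have "\<dots> = ennreal (\<rho> ^ 0 * (latency_const * measure_pmf.prob (gs ! g) {x. x \<noteq> None}))"
    using K_nonneg potential_bound_nonneg by (simp add: latency_const_def ennreal_mult[symmetric] algebra_simps)
  finally show ?case by simp
next
  case (Suc k)
  have "(\<integral>\<^sup>+\<sigma>. ennreal (tag_weight (s, g) \<sigma>) \<partial>mac_run (rr_protocol n) n gs (Suc s + Suc k))
      \<le> ennreal \<rho> * (\<integral>\<^sup>+\<sigma>. ennreal (tag_weight (s, g) \<sigma>) \<partial>mac_run (rr_protocol n) n gs (Suc s + k)) + 0"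
    unfolding add_Suc_right mac_run.simps
    by (intro nn_integral_bind_pmf_le_affine) (simp add: tag_drift[OF protocol_inv_mac_run[OF n_pos]])
  also have "\<dots> \<le> ennreal \<rho> * ennreal (\<rho> ^ k * (latency_const * measure_pmf.prob (gs ! g) {x. x \<noteq> None}))"
    using Suc.IH by (simp add: mult_left_mono)
  also have "\<dots> = ennreal (\<rho> ^ Suc k * (latency_const * measure_pmf.prob (gs ! g) {x. x \<noteq> None}))"
    using rho_nonneg K_nonneg potential_bound_nonneg
    by (simp add: latency_const_def ennreal_mult[symmetric] algebra_simps)
  finally show ?case .
qed

lemma prob_in_system_le:
  fixes p :: "gstate pmf"
  assumes "(\<integral>\<^sup>+\<sigma>. ennreal (tag_weight tag \<sigma>) \<partial>p) \<le> ennreal x" "0 \<le> x"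
  shows "measure_pmf.prob p {\<sigma>. in_system n tag \<sigma>} \<le> x"
proof -
  have "emeasure (measure_pmf p) {\<sigma>. in_system n tag \<sigma>} = (\<integral>\<^sup>+\<sigma>. indicator {\<sigma>. in_system n tag \<sigma>} \<sigma> \<partial>p)"
    by simp
  also have "\<dots> \<le> (\<integral>\<^sup>+\<sigma>. ennreal (tag_weight tag \<sigma>) \<partial>p)"
    using tag_potential_nonneg[OF M_nonneg] theta_pos by (intro nn_integral_mono) (auto simp: indicator_def)
  also have "\<dots> \<le> ennreal x" by (rule assms(1))
  finally show ?thesis using assms(2) by (simp add: measure_pmf.emeasure_eq_measure)
qed

lemma rr_protocol_stable: "mac_stable (rr_protocol n) n gs"
  unfolding mac_stable_def
proof (intro conjI exI allI impI)
  show "(\<integral>\<^sup>+\<sigma>. ennreal (real (length (snd (\<sigma> i)))) \<partial>measure_pmf (mac_run (rr_protocol n) n gs t))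
          \<le> ennreal (potential_bound / \<theta>)" if "i < n" for t i
    using expected_queue_bound[OF that] .
next
  fix s g m assume g: "g < length gs"
  let ?p = "measure_pmf.prob (gs ! g) {x. x \<noteq> None}"
  have "measure_pmf.prob (mac_run (rr_protocol n) n gs (Suc s + k)) {\<sigma>. \<exists>i<n. (s, g) \<in> set (snd (\<sigma> i))}
      \<le> \<rho> ^ k * (latency_const * ?p)" for k
    using prob_in_system_le[OF tag_weight_bound[OF g]] rho_nonneg K_nonneg potential_bound_nonneg
    by (simp add: in_system_def latency_const_def)
  then have "(\<Sum>k<m. measure_pmf.prob (mac_run (rr_protocol n) n gs (Suc s + k)) {\<sigma>. \<exists>i<n. (s, g) \<in> set (snd (\<sigma> i))})
      \<le> (\<Sum>k<m. \<rho> ^ k) * (latency_const * ?p)"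
    unfolding sum_distrib_right by (rule sum_mono)
  also have "\<dots> \<le> 1 / (1 - \<rho>) * (latency_const * ?p)"
  proof (rule mult_right_mono)
    have "(\<Sum>k<m. \<rho> ^ k) = (1 - \<rho> ^ m) / (1 - \<rho>)" using rho_less_1 by (simp add: sum_gp_strict)
    also have "\<dots> \<le> 1 / (1 - \<rho>)" using rho_less_1 rho_nonneg by (intro divide_right_mono) simp_all
    finally show "(\<Sum>k<m. \<rho> ^ k) \<le> 1 / (1 - \<rho>)" .
    show "0 \<le> latency_const * ?p"
      using K_nonneg potential_bound_nonneg by (simp add: latency_const_def)
  qed
  finally show "(\<Sum>k<m. measure_pmf.prob (mac_run (rr_protocol n) n gs (Suc s + k)) {\<sigma>. \<exists>i<n. (s, g) \<in> set (snd (\<sigma> i))})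
      \<le> latency_const / (1 - \<rho>) * ?p" by simp
qed

end

lemma exp_two_mult_le:
  fixes \<theta> :: real
  assumes "0 < \<theta>" "\<theta> \<le> 1/8"
  shows "exp (2 * \<theta>) - 1 \<le> 5/2 * \<theta>"
proof -
  have "exp (2 * \<theta>) \<le> 1 + 2 * \<theta> + (2 * \<theta>)\<^sup>2" using assms by (intro exp_bound) simp_all
  moreover have "\<theta> * \<theta> \<le> 1/8 * \<theta>" using assms by (intro mult_right_mono) simp_all
  ultimately show ?thesis by (simp add: power2_eq_square)
qed

lemma drift_parameters_exist:
  assumes "0 \<le> l" "l < 1 / exp 1"
  obtains \<theta> \<rho> :: real where "0 < \<theta>" "exp (- \<theta>) * exp (l * (exp (2 * \<theta>) - 1)) \<le> \<rho>"
    "(1 - (1/2)^n * (1 - exp (- 1))) * exp (l * (exp (2 * \<theta>) - 1)) \<le> \<rho>" "\<rho> < 1"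
proof -
  have e: "5/2 \<le> exp (1::real)" using exp_lower_Taylor_quadratic[of 1] by simp
  have "l * (5/2) \<le> l * exp 1" using e assms(1) by (rule mult_left_mono)
  moreover have "l * exp 1 < 1" using assms(2) by (simp add: field_simps)
  ultimately have l: "l * (5/2) < 1" by linarith
  define q :: real where "q = (1/2)^n"
  have q: "0 < q" "q \<le> 1" unfolding q_def by (simp_all add: power_le_one)
  define \<theta> where "\<theta> = q / 8"
  have \<theta>: "0 < \<theta>" "\<theta> \<le> 1/8" using q by (simp_all add: \<theta>_def)
  define Z where "Z = l * (exp (2 * \<theta>) - 1)"
  have "Z \<le> l * (5/2 * \<theta>)" unfolding Z_def using exp_two_mult_le[OF \<theta>] assms(1) by (rule mult_left_mono)
  also have "\<dots> = (l * (5/2)) * \<theta>" by simp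
  also have "\<dots> < 1 * \<theta>" using l \<theta> by (intro mult_strict_right_mono)
  finally have Z: "Z < \<theta>" by simp
  have frame: "exp (- \<theta>) * exp Z < 1"
    using Z by (simp add: exp_add[symmetric])
  have setup_bound: "(1 - q * (1 - exp (- 1))) * exp Z < 1"
  proof -
    have "exp (- 1 :: real) = 1 / exp 1" by (simp add: exp_minus field_simps)
    also have "\<dots> \<le> 1 / 2" using e by (simp add: divide_le_eq)
    finally have "q * (1/2) \<le> q * (1 - exp (- 1))" using q by (intro mult_left_mono) simp_all
    then have "Z - q * (1 - exp (- 1)) < 0" using Z q(1) unfolding \<theta>_def by linarith
    have "(1 - q * (1 - exp (- 1))) * exp Z \<le> exp (- (q * (1 - exp (- 1)))) * exp Z"
      using exp_ge_add_one_self[of "- (q * (1 - exp (- 1)))"] by (intro mult_right_mono) simp_all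
    also have "\<dots> = exp (Z - q * (1 - exp (- 1)))" by (simp add: exp_add[symmetric])
    also have "\<dots> < 1" using \<open>Z - q * (1 - exp (- 1)) < 0\<close> by simp
    finally show ?thesis .
  qed
  show ?thesis
    using that[of \<theta> "max (exp (- \<theta>) * exp Z) ((1 - q * (1 - exp (- 1))) * exp Z)"] \<theta>(1) frame setup_bound
    by (simp add: Z_def q_def)
qed

theorem mainTheorem9:
  fixes lam :: real
  assumes "lam < 1 / exp 1"
  shows "\<exists>P :: nat \<Rightarrow> mac_protocol. \<forall>n gs.
           valid_gens n gs \<and> inj_rate gs = lam \<longrightarrow> mac_stable (P n) n gs"
proof (intro exI[of _ rr_protocol] allI impI)
  fix n gs assume "valid_gens n gs \<and> inj_rate gs = lam"
  then have rate: "inj_rate gs = lam" by simp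
  show "mac_stable (rr_protocol n) n gs"
  proof (cases "n = 0")
    case True
    then show ?thesis unfolding mac_stable_def by (simp add: exI[of _ 0])
  next
    case False
    have "0 \<le> inj_rate gs" unfolding inj_rate_def by (intro sum_nonneg) simp
    then obtain \<theta> \<rho> where "0 < \<theta>" "exp (- \<theta>) * exp (lam * (exp (2 * \<theta>) - 1)) \<le> \<rho>"
      "(1 - (1/2)^n * (1 - exp (- 1))) * exp (lam * (exp (2 * \<theta>) - 1)) \<le> \<rho>" "\<rho> < 1"
      using drift_parameters_exist[of lam n] assms rate by auto
    then interpret drift_setting n gs \<theta> \<rho> "1 / \<theta>" "exp (inj_rate gs * (exp (2 * \<theta>) - 1))"
      using False rate by unfold_locales simp_all
    show ?thesis by (rule rr_protocol_stable)
  qed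
qed

end
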